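(* Let $d>K\ge1$, $\mathbf Q\in\mathrm{St}(d,K)$, $\lambda_1>\dots>\lambda_K>0$, $\boldsymbol\Theta=\mathrm{diag}(\sqrt{\lambda_1},\dots,\sqrt{\lambda_K})$, $a_1>\dots>a_K>0$, and let $g$, $d_F$, $\mathcal A_\alpha$, $\rho_\alpha$ be as in the context. Then there exists $\delta\in(0,\tfrac{\sqrt2}{2})$ with $\lambda_Ka_K-\lambda_1a_1\delta>0$ such that for every $\alpha$ with $0\le\alpha<\lambda_Ka_K-\lambda_1a_1\delta$ there exists $\eta_1>0$ such that $$d_F(\mathbf X,\mathbf Q)\le\eta_1\,\rho_\alpha(\mathbf X)\quad\text{for all }\mathbf X\in\mathrm{St}(d,K)\text{ with }d_F(\mathbf X,\mathbf Q)\le\delta.$$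
   Context: $\mathrm{St}(d,K)=\{\mathbf X\in\mathbb R^{d\times K}:\mathbf X^\top\mathbf X=\mathbf I_K\}$. $g(\mathbf X)=\mathrm{tr}(\mathbf X^\top\mathbf Q\boldsymbol\Theta^2\mathbf Q^\top\mathbf X\,\mathrm{diag}(a_1,\dots,a_K))$, to be maximized over $\mathrm{St}(d,K)$. $d_F(\mathbf X,\mathbf Q)=\min_{\mathbf q\in\{1,-1\}^K}\|\mathbf X-\mathbf Q\,\mathrm{diag}(\mathbf q)\|_F$. For $\alpha\ge0$, $\mathcal A_\alpha(\mathbf X)=\alpha\mathbf X+\mathbf Q\boldsymbol\Theta^2\mathbf Q^\top\mathbf X\,\mathrm{diag}(a_1,\dots,a_K)$. If $\mathcal A_\alpha(\mathbf X)=\mathbf U\boldsymbol\Sigma\mathbf V^\top$ is a thin SVD, the residual is $\rho_\alpha(\mathbf X)=\|\mathbf X\mathbf V\boldsymbol\Sigma\mathbf V^\top-\mathcal A_\alpha(\mathbf X)\|_F$ (note $\mathbf V\boldsymbol\Sigma\mathbf V^\top=(\mathcal A_\alpha(\mathbf X)^\top\mathcal A_\alpha(\mathbf X))^{1/2}$, so this does not depend on the SVD chosen). *)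

theory Defs
  imports "HOL-Analysis.Analysis" "Jordan_Normal_Form.Matrix"
begin

definition stiefel :: "nat \<Rightarrow> nat \<Rightarrow> real mat set" where
  "stiefel d K = {X \<in> carrier_mat d K. transpose_mat X * X = 1\<^sub>m K}"

definition frob_norm :: "real mat \<Rightarrow> real" where
  "frob_norm A = sqrt (\<Sum>i<dim_row A. \<Sum>j<dim_col A. (A $$ (i,j))\<^sup>2)"

definition dist_F :: "real mat \<Rightarrow> real mat \<Rightarrow> real" where
  "dist_F X Q = Min ((\<lambda>q. frob_norm (X - Q * mat_diag (dim_col Q) (\<lambda>i. q ! i))) `
                     {q :: real list. length q = dim_col Q \<and> set q \<subseteq> {1, -1}})"

definition A_op :: "real mat \<Rightarrow> real mat \<Rightarrow> (nat \<Rightarrow> real) \<Rightarrow> real \<Rightarrow> real mat \<Rightarrow> real mat" where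
  "A_op Q Theta a \<alpha> X =
     \<alpha> \<cdot>\<^sub>m X + Q * (Theta * Theta) * transpose_mat Q * X * mat_diag (dim_col X) a"

definition psd_sqrt :: "real mat \<Rightarrow> real mat" where
  "psd_sqrt M = (THE S. S \<in> carrier_mat (dim_row M) (dim_row M) \<and> transpose_mat S = S \<and>
      (\<forall>v \<in> carrier_vec (dim_row M). 0 \<le> v \<bullet> (S *\<^sub>v v)) \<and> S * S = M)"

text \<open>Residual rho_alpha(X) = ||X (A^T A)^{1/2} - A||_F with A = A_alpha(X)
  (equal to ||X V Sigma V^T - A||_F for any thin SVD A = U Sigma V^T).\<close>
definition rho :: "real mat \<Rightarrow> real mat \<Rightarrow> (nat \<Rightarrow> real) \<Rightarrow> real \<Rightarrow> real mat \<Rightarrow> real" where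
  "rho Q Theta a \<alpha> X =
     (let A = A_op Q Theta a \<alpha> X in frob_norm (X * psd_sqrt (transpose_mat A * A) - A))"

end

theory Submission
  imports Defs "Jordan_Normal_Form.Spectral_Radius"
begin

(* Write P = (A\<^sup>T A)\<^sup>1\<^sup>/\<^sup>2 for A = A_alpha(X), so the residual is R = X P - A with P symmetric.
  Projecting R away from the columns of X kills X P and alpha X, leaving
  -(I - X X\<^sup>T) Q \<Lambda> Q\<^sup>T X D; projecting instead onto them, the symmetry of P gives
  X\<^sup>T R - R\<^sup>T X = D G - G D with G = X\<^sup>T Q \<Lambda> Q\<^sup>T X. Write X = Q diag(q) + E for the best
  sign vector q. The first identity bounds the part of E orthogonal to the range of Q, because
  G is close to \<Lambda>; the second bounds the off-diagonal Q-coordinates S = Q\<^sup>T E, because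
  (\<lambda>\<^sub>i - \<lambda>\<^sub>j) S\<^sub>i\<^sub>j = G\<^sub>i\<^sub>j + O(\<epsilon>\<^sup>2), using that S + S\<^sup>T = -E\<^sup>T E is quadratic in \<epsilon> = |E|.
  Altogether \<epsilon> \<le> c\<^sub>1 \<rho> + c\<^sub>2 \<epsilon>\<^sup>2, which gives \<epsilon> \<le> \<eta> \<rho> once \<epsilon> is small. None of this
  involves alpha, so \<eta> can even be chosen independently of alpha. *)

lemma index_mult_mat_sum:
  "A \<in> carrier_mat n p \<Longrightarrow> B \<in> carrier_mat p q \<Longrightarrow> i < n \<Longrightarrow> j < q \<Longrightarrow>
   (A * B) $$ (i,j) = (\<Sum>k<p. A $$ (i,k) * B $$ (k,j))"
  by (auto simp add: index_mult_mat scalar_prod_def atLeast0LessThan intro!: sum.cong)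

lemma index_mult_mat_vec_sum:
  "A \<in> carrier_mat n p \<Longrightarrow> v \<in> carrier_vec p \<Longrightarrow> i < n \<Longrightarrow>
   (A *\<^sub>v v) $ i = (\<Sum>k<p. A $$ (i,k) * v $ k)"
  by (auto simp add: scalar_prod_def atLeast0LessThan intro!: sum.cong)

lemma index_transpose_mult_mat_sum:
  assumes "A \<in> carrier_mat d K" and "i < K" and "j < K"
  shows "(transpose_mat A * A) $$ (i,j) = (\<Sum>r<d. A $$ (r,i) * A $$ (r,j))"
  using assms by (subst index_mult_mat_sum[of _ K d _ K]) auto

lemma index_congruence_mat_sum:
  assumes Y: "Y \<in> carrier_mat n p" and M: "M \<in> carrier_mat n n" and i: "i < p" and j: "j < p"
  shows "(transpose_mat Y * M * Y) $$ (i,j) = (\<Sum>a<n. \<Sum>b<n. Y $$ (a,i) * M $$ (a,b) * Y $$ (b,j))"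
proof -
  have YM: "transpose_mat Y * M \<in> carrier_mat p n" using Y M by simp
  have YT: "transpose_mat Y \<in> carrier_mat p n" using Y by simp
  have "(transpose_mat Y * M * Y) $$ (i,j) = (\<Sum>b<n. (transpose_mat Y * M) $$ (i,b) * Y $$ (b,j))"
    by (rule index_mult_mat_sum[OF YM Y i j])
  also have "\<dots> = (\<Sum>b<n. (\<Sum>a<n. Y $$ (a,i) * M $$ (a,b)) * Y $$ (b,j))"
    by (intro sum.cong refl) (use Y i in \<open>simp add: index_mult_mat_sum[OF YT M i]\<close>)
  also have "\<dots> = (\<Sum>a<n. \<Sum>b<n. Y $$ (a,i) * M $$ (a,b) * Y $$ (b,j))"
    by (simp add: sum_distrib_right) (rule sum.swap)
  finally show ?thesis .
qed

lemma transpose_mat_diag: "transpose_mat (mat_diag n f) = mat_diag n f"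
  by (rule eq_matI) (auto simp: mat_diag_def)

lemma symmetric_mat_entry:
  "transpose_mat M = M \<Longrightarrow> M \<in> carrier_mat n n \<Longrightarrow> i < n \<Longrightarrow> j < n \<Longrightarrow> M $$ (i,j) = M $$ (j,i)"
  by (metis carrier_matD index_transpose_mat(1))

lemma transpose_congruence_mat:
  fixes M Z :: "'a::comm_ring_1 mat"
  assumes M: "M \<in> carrier_mat n n" and MT: "transpose_mat M = M" and Z: "Z \<in> carrier_mat n p"
  shows "transpose_mat (transpose_mat Z * M * Z) = transpose_mat Z * M * Z"
proof -
  have ZM: "transpose_mat Z * M \<in> carrier_mat p n" using M Z by simp
  have "transpose_mat (transpose_mat Z * M * Z) = transpose_mat Z * transpose_mat (transpose_mat Z * M)"
    using transpose_mult[OF ZM Z] by simp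
  also have "transpose_mat (transpose_mat Z * M) = M * Z"
    using transpose_mult[of "transpose_mat Z" p n M n] M MT Z by simp
  finally show ?thesis using M Z by (simp add: assoc_mult_mat[of _ p n _ n _ p])
qed

lemma sum_lessThan_split_shift:
  fixes f :: "nat \<Rightarrow> 'a::comm_monoid_add"
  assumes "k \<le> n"
  shows "(\<Sum>j<n. f j) = (\<Sum>j<k. f j) + (\<Sum>j<n-k. f (j+k))"
proof -
  have "(\<Sum>j<n. f j) = (\<Sum>j<k. f j) + (\<Sum>j\<in>{k..<n}. f j)"
    using assms by (subst sum.union_disjoint[symmetric]) (auto intro!: sum.cong)
  also have "(\<Sum>j\<in>{k..<n}. f j) = (\<Sum>j<n-k. f (j+k))"
    using assms sum.shift_bounds_nat_ivl[of f 0 k "n-k"] by (simp add: atLeast0LessThan)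
  finally show ?thesis .
qed

lemma sum_mult_delta:
  fixes f :: "nat \<Rightarrow> real"
  assumes "j < K"
  shows "(\<Sum>k<K. f k * (if k = j then 1 else 0)) = f j"
proof -
  have "(\<Sum>k<K. f k * (if k = j then 1 else 0)) = (\<Sum>k<K. if k = j then f k else 0)"
    by (rule sum.cong) auto
  thus ?thesis using assms by simp
qed

lemma nonzero_vec_has_nonzero_entry:
  fixes v :: "'a::zero vec"
  assumes "v \<in> carrier_vec m" and "v \<noteq> 0\<^sub>v m"
  obtains i where "i < m" and "v $ i \<noteq> 0"
  using assms by (metis eq_vecI carrier_vecD index_zero_vec)

section \<open>Spectral theorem for real symmetric matrices\<close>

lemma real_symmetric_mat_eigenvalue_real:
  fixes N :: "real mat" and v :: "complex vec"
  assumes sym: "\<And>i j. i < m \<Longrightarrow> j < m \<Longrightarrow> N $$ (i,j) = N $$ (j,i)"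
    and v: "v \<in> carrier_vec m" "v \<noteq> 0\<^sub>v m"
    and ev: "\<And>i. i < m \<Longrightarrow> (\<Sum>j<m. complex_of_real (N $$ (i,j)) * v $ j) = \<mu> * v $ i"
  shows "Im \<mu> = 0"
proof -
  define s where "s = (\<Sum>i<m. cnj (v $ i) * (\<Sum>j<m. complex_of_real (N $$ (i,j)) * v $ j))"
  define r where "r = (\<Sum>i<m. (cmod (v $ i))\<^sup>2)"
  have s_eq: "s = \<mu> * complex_of_real r"
  proof -
    have "s = \<mu> * (\<Sum>i<m. cnj (v $ i) * v $ i)"
      unfolding s_def by (simp add: ev sum_distrib_left mult.assoc mult.left_commute)
    also have "(\<Sum>i<m. cnj (v $ i) * v $ i) = complex_of_real r"
      unfolding r_def of_real_sum by (intro sum.cong refl) (metis complex_norm_square mult.commute)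
    finally show ?thesis .
  qed
  have "cnj s = (\<Sum>i<m. v $ i * (\<Sum>j<m. complex_of_real (N $$ (i,j)) * cnj (v $ j)))"
    unfolding s_def by (simp add: sum_distrib_left)
  also have "\<dots> = (\<Sum>i<m. \<Sum>j<m. v $ i * complex_of_real (N $$ (i,j)) * cnj (v $ j))"
    by (simp add: sum_distrib_left mult.assoc)
  also have "\<dots> = (\<Sum>j<m. \<Sum>i<m. v $ i * complex_of_real (N $$ (i,j)) * cnj (v $ j))"
    by (rule sum.swap)
  also have "\<dots> = s"
    unfolding s_def by (auto simp: sum_distrib_left sym mult.commute mult.left_commute intro!: sum.cong)
  finally have cnj_s: "cnj s = s" .
  have "Im s = 0" using arg_cong[OF cnj_s, of Im] by simp
  obtain i0 where i0: "i0 < m" "v $ i0 \<noteq> 0" using nonzero_vec_has_nonzero_entry[OF v] .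
  have "0 < (cmod (v $ i0))\<^sup>2" using i0 by simp
  also have "\<dots> \<le> r" unfolding r_def by (rule member_le_sum) (use i0 in auto)
  finally show ?thesis using \<open>Im s = 0\<close> s_eq by simp
qed

lemma real_symmetric_mat_has_eigenvector:
  fixes N :: "real mat"
  assumes N: "N \<in> carrier_mat m m" and m: "0 < m"
    and sym: "\<And>i j. i < m \<Longrightarrow> j < m \<Longrightarrow> N $$ (i,j) = N $$ (j,i)"
  shows "\<exists>\<nu> y. y \<in> carrier_vec m \<and> y \<noteq> 0\<^sub>v m \<and> N *\<^sub>v y = \<nu> \<cdot>\<^sub>v y"
proof -
  define Nc where "Nc = map_mat complex_of_real N"
  have Nc: "Nc \<in> carrier_mat m m" using N by (simp add: Nc_def)
  from spectrum_non_empty[OF Nc m] obtain \<mu> where "eigenvalue Nc \<mu>" by (auto simp: spectrum_def)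
  then obtain v where v: "v \<in> carrier_vec m" "v \<noteq> 0\<^sub>v m" and eq: "Nc *\<^sub>v v = \<mu> \<cdot>\<^sub>v v"
    using Nc by (auto simp: eigenvalue_def eigenvector_def)
  have ev: "(\<Sum>j<m. complex_of_real (N $$ (i,j)) * v $ j) = \<mu> * v $ i" if i: "i < m" for i
  proof -
    have "(Nc *\<^sub>v v) $ i = (\<Sum>j<m. Nc $$ (i,j) * v $ j)"
      by (rule index_mult_mat_vec_sum[OF Nc v(1) i])
    also have "\<dots> = (\<Sum>j<m. complex_of_real (N $$ (i,j)) * v $ j)"
      using N i by (auto simp: Nc_def intro!: sum.cong)
    finally show ?thesis using eq v i by simp
  qed
  have real: "Im \<mu> = 0" by (rule real_symmetric_mat_eigenvalue_real[OF sym v ev])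
  define re where "re = vec m (\<lambda>i. Re (v $ i))"
  define im where "im = vec m (\<lambda>i. Im (v $ i))"
  have "N *\<^sub>v re = Re \<mu> \<cdot>\<^sub>v re"
  proof (rule eq_vecI)
    fix i assume "i < dim_vec (Re \<mu> \<cdot>\<^sub>v re)" hence i: "i < m" by (simp add: re_def)
    show "(N *\<^sub>v re) $ i = (Re \<mu> \<cdot>\<^sub>v re) $ i"
      using arg_cong[OF ev[OF i], of Re] i real
      by (simp add: index_mult_mat_vec_sum[OF N _ i] re_def Re_sum)
  qed (use N in \<open>simp add: re_def\<close>)
  moreover have "N *\<^sub>v im = Re \<mu> \<cdot>\<^sub>v im"
  proof (rule eq_vecI)
    fix i assume "i < dim_vec (Re \<mu> \<cdot>\<^sub>v im)" hence i: "i < m" by (simp add: im_def)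
    show "(N *\<^sub>v im) $ i = (Re \<mu> \<cdot>\<^sub>v im) $ i"
      using arg_cong[OF ev[OF i], of Im] i real
      by (simp add: index_mult_mat_vec_sum[OF N _ i] im_def Im_sum)
  qed (use N in \<open>simp add: im_def\<close>)
  moreover have "re \<noteq> 0\<^sub>v m \<or> im \<noteq> 0\<^sub>v m"
  proof -
    obtain i0 where "i0 < m" "v $ i0 \<noteq> 0" using nonzero_vec_has_nonzero_entry[OF v] .
    thus ?thesis by (auto simp: re_def im_def complex_eq_iff dest!: arg_cong[of _ _ "\<lambda>w. w $ i0"])
  qed
  moreover have "re \<in> carrier_vec m" "im \<in> carrier_vec m" by (auto simp: re_def im_def)
  ultimately show ?thesis by blast
qed

lemma real_symmetric_mat_has_unit_eigenvector:
  fixes N :: "real mat"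
  assumes N: "N \<in> carrier_mat m m" and m: "0 < m"
    and sym: "\<And>i j. i < m \<Longrightarrow> j < m \<Longrightarrow> N $$ (i,j) = N $$ (j,i)"
  obtains y \<nu> where "(\<Sum>i<m. (y i)\<^sup>2) = 1"
    and "\<And>i. i < m \<Longrightarrow> (\<Sum>j<m. N $$ (i,j) * y j) = \<nu> * y i"
proof -
  obtain \<nu> v where v: "v \<in> carrier_vec m" "v \<noteq> 0\<^sub>v m" and Nv: "N *\<^sub>v v = \<nu> \<cdot>\<^sub>v v"
    using real_symmetric_mat_has_eigenvector[OF N m sym] by blast
  define s where "s = (\<Sum>i<m. (v $ i)\<^sup>2)"
  obtain i0 where i0: "i0 < m" "v $ i0 \<noteq> 0" using nonzero_vec_has_nonzero_entry[OF v] .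
  have "0 < (v $ i0)\<^sup>2" using i0 by simp
  also have "(v $ i0)\<^sup>2 \<le> s" unfolding s_def by (rule member_le_sum) (use i0 in auto)
  finally have s: "0 < s" .
  define y where "y i = v $ i / sqrt s" for i
  have "(\<Sum>i<m. (y i)\<^sup>2) = 1"
    using s by (simp add: y_def power_divide sum_divide_distrib[symmetric] s_def[symmetric])
  moreover have "(\<Sum>j<m. N $$ (i,j) * y j) = \<nu> * y i" if i: "i < m" for i
    using index_mult_mat_vec_sum[OF N v(1) i] arg_cong[OF Nv, of "\<lambda>w. w $ i"] v i
    by (simp add: y_def sum_divide_distrib)
  ultimately show ?thesis using that by blast
qed

(* For w = 0 the division by zero makes this the identity matrix. *)
definition householder_mat :: "nat \<Rightarrow> (nat \<Rightarrow> real) \<Rightarrow> real mat" where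
  "householder_mat n w =
     mat n n (\<lambda>(i,j). (if i = j then 1 else 0) - 2 / (\<Sum>l<n. (w l)\<^sup>2) * w i * w j)"

lemma householder_mat_carrier [simp]: "householder_mat n w \<in> carrier_mat n n"
  by (simp add: householder_mat_def)

lemma transpose_householder_mat: "transpose_mat (householder_mat n w) = householder_mat n w"
  by (rule eq_matI) (auto simp: householder_mat_def)

lemma householder_mat_involutive: "householder_mat n w * householder_mat n w = 1\<^sub>m n"
proof (rule eq_matI)
  define H where "H = householder_mat n w"
  define ww where "ww = (\<Sum>l<n. (w l)\<^sup>2)"
  define c where "c = 2 / ww"
  have H: "H \<in> carrier_mat n n" by (simp add: H_def)
  have cww: "c * c * ww = 2 * c" by (cases "ww = 0") (auto simp: c_def field_simps)
  fix i j assume "i < dim_row (1\<^sub>m n :: real mat)" "j < dim_col (1\<^sub>m n :: real mat)"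
  hence i: "i < n" and j: "j < n" by auto
  have "(H * H) $$ (i,j) = (\<Sum>l<n. H $$ (i,l) * H $$ (l,j))" by (rule index_mult_mat_sum[OF H H i j])
  also have "\<dots> = (\<Sum>l<n. ((if i = l then 1 else 0) - c * w i * w l) *
                                   ((if l = j then 1 else 0) - c * w l * w j))"
    using i j by (intro sum.cong refl) (simp add: H_def householder_mat_def c_def ww_def)
  also have "\<dots> = (\<Sum>l<n. (if l = i then (if i = j then 1 else 0) else 0)
       - (if l = i then c * w l * w j else 0) - (if l = j then c * w i * w l else 0)
       + c * c * w i * w j * (w l)\<^sup>2)"
    by (intro sum.cong refl) (auto simp: algebra_simps power2_eq_square)
  also have "\<dots> = (if i = j then 1 else 0) + w i * w j * (c * c * ww - 2 * c)"
    using i j by (simp add: sum.distrib sum_subtractf ww_def sum_distrib_left[symmetric] algebra_simps)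
  finally show "(householder_mat n w * householder_mat n w) $$ (i,j) = 1\<^sub>m n $$ (i,j)"
    using i j cww by (simp add: H_def)
qed (simp_all add: householder_mat_def)

lemma householder_mat_fixes_col:
  "w i = 0 \<Longrightarrow> i < n \<Longrightarrow> j < n \<Longrightarrow> householder_mat n w $$ (j,i) = (if j = i then 1 else 0)"
  by (simp add: householder_mat_def)

text \<open>The reflection in the hyperplane orthogonal to \<open>e\<^sub>k - u\<close> swaps the unit vectors \<open>e\<^sub>k\<close> and \<open>u\<close>.\<close>

lemma householder_mat_col_unit:
  assumes k: "k < n" and u: "(\<Sum>i<n. (u i)\<^sup>2) = 1" and j: "j < n"
  shows "householder_mat n (\<lambda>i. (if i = k then 1 else 0) - u i) $$ (j,k) = u j"
proof -
  define w where "w = (\<lambda>i. (if i = k then 1 else 0) - u i)"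
  define ww where "ww = (\<Sum>l<n. (w l)\<^sup>2)"
  have "ww = (\<Sum>l<n. (if l = k then 1 else 0) - (if l = k then 2 * u l else 0) + (u l)\<^sup>2)"
    unfolding ww_def w_def by (intro sum.cong refl) (auto simp: power2_eq_square algebra_simps)
  also have "\<dots> = 2 * (1 - u k)" using k u by (simp add: sum.distrib sum_subtractf)
  finally have ww_eq: "ww = 2 * (1 - u k)" .
  show ?thesis
  proof (cases "ww = 0")
    case True
    have "\<forall>i\<in>{..<n}. (w i)\<^sup>2 = 0"
      using True unfolding ww_def by (subst sum_nonneg_eq_0_iff[symmetric]) auto
    hence "u j = (if j = k then 1 else 0)" using j by (auto simp: w_def)
    thus ?thesis using True j k by (simp add: householder_mat_def w_def[symmetric] ww_def[symmetric])
  next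
    case False
    hence "2 / ww * w k = 1" using ww_eq by (simp add: w_def)
    thus ?thesis using j k
      by (simp add: householder_mat_def w_def[symmetric] ww_def[symmetric] algebra_simps)
        (simp add: w_def)
  qed
qed

definition cols_diagonal_upto :: "nat \<Rightarrow> real mat \<Rightarrow> bool" where
  "cols_diagonal_upto k B \<longleftrightarrow> (\<forall>i<k. \<forall>j<dim_row B. j \<noteq> i \<longrightarrow> B $$ (j,i) = 0)"

lemma trailing_block_unit_eigenvector:
  assumes B: "B \<in> carrier_mat n n" and BT: "transpose_mat B = B" and k: "k < n"
    and diag: "cols_diagonal_upto k B"
  shows "\<exists>u \<nu>. (\<Sum>i<n. (u i)\<^sup>2) = 1 \<and> (\<forall>i<k. u i = 0) \<and>
                (\<forall>i<n. (\<Sum>j<n. B $$ (i,j) * u j) = \<nu> * u i)"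
proof -
  have Bsym: "\<And>i j. i < n \<Longrightarrow> j < n \<Longrightarrow> B $$ (i,j) = B $$ (j,i)"
    using symmetric_mat_entry[OF BT B] .
  have Bz: "B $$ (i,j) = 0" if "i < k" "j < n" "j \<noteq> i" for i j
    using diag that Bsym[of i j] k B unfolding cols_diagonal_upto_def by auto
  define m where "m = n - k"
  have m: "0 < m" using k by (simp add: m_def)
  define N where "N = mat m m (\<lambda>(i,j). B $$ (i+k, j+k))"
  have N: "N \<in> carrier_mat m m" by (simp add: N_def)
  obtain y \<nu> where y_unit: "(\<Sum>i<m. (y i)\<^sup>2) = 1"
    and Ny: "\<And>i. i < m \<Longrightarrow> (\<Sum>j<m. N $$ (i,j) * y j) = \<nu> * y i"
    using real_symmetric_mat_has_unit_eigenvector[OF N m] Bsym by (auto simp: N_def m_def)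
  have Nyi: "(\<Sum>j<m. B $$ (i+k, j+k) * y j) = \<nu> * y i" if "i < m" for i
    using Ny[OF that] that by (simp add: N_def)
  define u where "u = (\<lambda>i. if i < k then 0 else y (i-k))"
  have u_shift: "u (j+k) = y j" for j by (simp add: u_def)
  have u_low: "\<forall>i<k. u i = 0" by (simp add: u_def)
  have "(\<Sum>i<n. (u i)\<^sup>2) = (\<Sum>i<k. (u i)\<^sup>2) + (\<Sum>i<m. (u (i+k))\<^sup>2)"
    unfolding m_def by (rule sum_lessThan_split_shift) (use k in simp)
  hence u_unit: "(\<Sum>i<n. (u i)\<^sup>2) = 1" using y_unit by (simp add: u_low u_shift)
  have "(\<Sum>j<n. B $$ (i,j) * u j) = \<nu> * u i" if i: "i < n" for i
  proof -
    have "(\<Sum>j<n. B $$ (i,j) * u j) = (\<Sum>j<k. B $$ (i,j) * u j) + (\<Sum>j<m. B $$ (i,j+k) * u (j+k))"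
      unfolding m_def by (rule sum_lessThan_split_shift) (use k in simp)
    also have "\<dots> = (\<Sum>j<m. B $$ (i,j+k) * y j)" by (simp add: u_low u_shift)
    finally have eq: "(\<Sum>j<n. B $$ (i,j) * u j) = (\<Sum>j<m. B $$ (i,j+k) * y j)" .
    show ?thesis
    proof (cases "i < k")
      case True
      have "(\<Sum>j<m. B $$ (i,j+k) * y j) = 0"
        by (rule sum.neutral) (use True Bz m_def in auto)
      then show ?thesis using eq True u_low by simp
    next
      case False
      then obtain i' where i': "i = i' + k" "i' < m" using i unfolding m_def
        by (metis add.commute le_add_diff_inverse less_diff_conv not_less)
      show ?thesis using eq Nyi[OF i'(2)] u_shift i' by simp
    qed
  qed
  thus ?thesis using u_unit u_low by blast
qed

lemma involution_congruence_cols_diagonal: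
  fixes B H :: "real mat"
  assumes B: "B \<in> carrier_mat n n" and H: "H \<in> carrier_mat n n" and HH: "H * H = 1\<^sub>m n"
    and k: "k < n" and diag: "cols_diagonal_upto k B"
    and H_low: "\<And>i j. i < k \<Longrightarrow> j < n \<Longrightarrow> H $$ (j,i) = (if j = i then 1 else 0)"
    and H_k: "\<And>i. i < n \<Longrightarrow> (\<Sum>j<n. B $$ (i,j) * H $$ (j,k)) = \<nu> * H $$ (i,k)"
  shows "cols_diagonal_upto (Suc k) (H * (B * H))"
proof -
  have BH: "B * H \<in> carrier_mat n n" using B H by simp
  have "(H * (B * H)) $$ (j,i) = 0" if i: "i < Suc k" and j: "j < n" and ji: "j \<noteq> i" for i j
  proof -
    have ii: "i < n" using i k by simp
    have "(H * (B * H)) $$ (j,i) = (\<Sum>b<n. H $$ (j,b) * (B * H) $$ (b,i))"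
      by (rule index_mult_mat_sum[OF H BH j ii])
    also have "\<dots> = 0"
    proof (cases "i < k")
      case True
      have "(B * H) $$ (b,i) = (if b = i then B $$ (i,i) else 0)" if b: "b < n" for b
        using b ii True diag H_low[OF True] B unfolding cols_diagonal_upto_def
        by (simp add: index_mult_mat_sum[OF B H b ii] if_distrib[where f="\<lambda>t. B $$ (b,_) * t"]
            sum.delta' cong: if_cong)
      hence "(\<Sum>b<n. H $$ (j,b) * (B * H) $$ (b,i)) = (\<Sum>b<n. if b = i then H $$ (j,i) * B $$ (i,i) else 0)"
        by (intro sum.cong) auto
      thus ?thesis using ii ji H_low[OF True j] by simp
    next
      case False
      hence ik: "i = k" using i by simp
      have "(B * H) $$ (b,i) = \<nu> * H $$ (b,k)" if b: "b < n" for b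
        using H_k[OF b] ik by (simp add: index_mult_mat_sum[OF B H b k])
      hence "(\<Sum>b<n. H $$ (j,b) * (B * H) $$ (b,i)) = \<nu> * (H * H) $$ (j,k)"
        using index_mult_mat_sum[OF H H j k] by (simp add: sum_distrib_left mult.left_commute)
      thus ?thesis using HH j k ji ik by simp
    qed
    finally show ?thesis .
  qed
  thus ?thesis unfolding cols_diagonal_upto_def using H BH by auto
qed

text \<open>One deflation step: a Householder reflection fixing the first \<open>k\<close> coordinates moves a unit
  eigenvector of the trailing block into column \<open>k\<close>.\<close>

lemma orthogonal_diagonalization_step:
  fixes M Z :: "real mat"
  assumes M: "M \<in> carrier_mat n n" and MT: "transpose_mat M = M"
    and Z: "Z \<in> carrier_mat n n" and ZZ: "transpose_mat Z * Z = 1\<^sub>m n"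
    and diag: "cols_diagonal_upto k (transpose_mat Z * M * Z)" and k: "k < n"
  shows "\<exists>Z'. Z' \<in> carrier_mat n n \<and> transpose_mat Z' * Z' = 1\<^sub>m n \<and>
             cols_diagonal_upto (Suc k) (transpose_mat Z' * M * Z')"
proof -
  define B where "B = transpose_mat Z * M * Z"
  have B: "B \<in> carrier_mat n n" using M Z by (simp add: B_def)
  have BT: "transpose_mat B = B" unfolding B_def by (rule transpose_congruence_mat[OF M MT Z])
  obtain u \<nu> where u_unit: "(\<Sum>i<n. (u i)\<^sup>2) = 1" and u_low: "\<forall>i<k. u i = 0"
    and Bu: "\<And>i. i < n \<Longrightarrow> (\<Sum>j<n. B $$ (i,j) * u j) = \<nu> * u i"
    using trailing_block_unit_eigenvector[OF B BT k] diag unfolding B_def by blast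
  define H where "H = householder_mat n (\<lambda>i. (if i = k then 1 else 0) - u i)"
  have H: "H \<in> carrier_mat n n" and HT: "transpose_mat H = H" and HH: "H * H = 1\<^sub>m n"
    unfolding H_def by (simp_all add: transpose_householder_mat householder_mat_involutive)
  have H_k: "H $$ (j,k) = u j" if "j < n" for j
    unfolding H_def by (rule householder_mat_col_unit[OF k u_unit that])
  have diag': "cols_diagonal_upto (Suc k) (H * (B * H))"
  proof (rule involution_congruence_cols_diagonal[OF B H HH k])
    show "cols_diagonal_upto k B" using diag by (simp add: B_def)
    show "H $$ (j,i) = (if j = i then 1 else 0)" if "i < k" "j < n" for i j
      unfolding H_def by (rule householder_mat_fixes_col) (use that u_low k in auto)
    show "(\<Sum>j<n. B $$ (i,j) * H $$ (j,k)) = \<nu> * H $$ (i,k)" if "i < n" for i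
    proof -
      have "(\<Sum>j<n. B $$ (i,j) * H $$ (j,k)) = (\<Sum>j<n. B $$ (i,j) * u j)"
        by (intro sum.cong) (auto simp: H_k)
      thus ?thesis using Bu[OF that] H_k that by simp
    qed
  qed
  define Z' where "Z' = Z * H"
  have Z': "Z' \<in> carrier_mat n n" using Z H by (simp add: Z'_def)
  have Z'T: "transpose_mat Z' = H * transpose_mat Z"
    using transpose_mult[OF Z H] HT by (simp add: Z'_def)
  have "transpose_mat Z' * Z' = H * (transpose_mat Z * Z) * H"
    unfolding Z'_def Z'T[unfolded Z'_def] using Z H by (simp add: assoc_mult_mat[of _ n n _ n _ n])
  hence "transpose_mat Z' * Z' = 1\<^sub>m n" using ZZ HH H by simp
  moreover have "transpose_mat Z' * M * Z' = H * (B * H)"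
    unfolding Z'_def Z'T[unfolded Z'_def] B_def using Z H M
    by (simp add: assoc_mult_mat[of _ n n _ n _ n])
  ultimately show ?thesis using Z' diag' by auto
qed

lemma symmetric_mat_orthogonal_diagonalization:
  fixes M :: "real mat"
  assumes M: "M \<in> carrier_mat n n" and MT: "transpose_mat M = M"
  obtains Z f where "Z \<in> carrier_mat n n" and "transpose_mat Z * Z = 1\<^sub>m n"
    and "transpose_mat Z * M * Z = mat_diag n f"
proof -
  have "k \<le> n \<Longrightarrow> \<exists>Z. Z \<in> carrier_mat n n \<and> transpose_mat Z * Z = 1\<^sub>m n \<and>
                         cols_diagonal_upto k (transpose_mat Z * M * Z)" for k
  proof (induction k)
    case 0
    show ?case by (intro exI[of _ "1\<^sub>m n"]) (auto simp: cols_diagonal_upto_def)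
  next
    case (Suc k)
    thus ?case using orthogonal_diagonalization_step[OF M MT] by auto
  qed
  then obtain Z where Z: "Z \<in> carrier_mat n n" "transpose_mat Z * Z = 1\<^sub>m n"
    and diag: "cols_diagonal_upto n (transpose_mat Z * M * Z)" by blast
  have "transpose_mat Z * M * Z = mat_diag n (\<lambda>i. (transpose_mat Z * M * Z) $$ (i,i))"
    using diag Z M by (intro eq_matI) (auto simp: cols_diagonal_upto_def mat_diag_def)
  thus ?thesis using that Z by blast
qed

section \<open>Positive semidefinite square roots\<close>

definition quad_form :: "nat \<Rightarrow> real mat \<Rightarrow> (nat \<Rightarrow> real) \<Rightarrow> real" where
  "quad_form n S f = (\<Sum>a<n. \<Sum>b<n. f a * S $$ (a,b) * f b)"

lemma scalar_prod_mult_mat_vec_eq_quad_form: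
  assumes S: "S \<in> carrier_mat n n" and v: "v \<in> carrier_vec n"
  shows "v \<bullet> (S *\<^sub>v v) = quad_form n S (\<lambda>i. v $ i)"
proof -
  have "v \<bullet> (S *\<^sub>v v) = (\<Sum>a<n. v $ a * (S *\<^sub>v v) $ a)"
    using S v by (simp add: scalar_prod_def atLeast0LessThan)
  also have "\<dots> = (\<Sum>a<n. v $ a * (\<Sum>b<n. S $$ (a,b) * v $ b))"
    by (intro sum.cong refl) (simp add: index_mult_mat_vec_sum[OF S v])
  finally show ?thesis by (simp add: quad_form_def sum_distrib_left mult.assoc)
qed

lemma psd_imp_quad_form_nonneg:
  assumes S: "S \<in> carrier_mat n n" and psd: "\<forall>v\<in>carrier_vec n. 0 \<le> v \<bullet> (S *\<^sub>v v)"
  shows "0 \<le> quad_form n S f"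
proof -
  have "0 \<le> vec n f \<bullet> (S *\<^sub>v vec n f)" using psd by simp
  also have "\<dots> = quad_form n S f"
    unfolding scalar_prod_mult_mat_vec_eq_quad_form[OF S vec_carrier] quad_form_def
    by (intro sum.cong refl) auto
  finally show ?thesis .
qed

lemma quad_form_gram_nonneg:
  fixes A :: "real mat"
  assumes A: "A \<in> carrier_mat d K"
  shows "0 \<le> quad_form K (transpose_mat A * A) f"
proof -
  have "quad_form K (transpose_mat A * A) f =
        (\<Sum>i<K. \<Sum>j<K. \<Sum>r<d. (A $$ (r,i) * f i) * (A $$ (r,j) * f j))"
    unfolding quad_form_def
    by (intro sum.cong refl) (simp add: index_transpose_mult_mat_sum[OF A] sum_distrib_left
        sum_distrib_right mult_ac)
  also have "\<dots> = (\<Sum>r<d. \<Sum>i<K. \<Sum>j<K. (A $$ (r,i) * f i) * (A $$ (r,j) * f j))"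
    by (subst sum.swap) (rule sum.cong[OF refl], rule sum.swap)
  also have "\<dots> = (\<Sum>r<d. (\<Sum>i<K. A $$ (r,i) * f i)\<^sup>2)"
    by (simp add: power2_eq_square sum_product)
  also have "\<dots> \<ge> 0" by (intro sum_nonneg) simp
  finally show ?thesis .
qed

lemma sum_square_distrib:
  fixes x :: "nat \<Rightarrow> real"
  shows "c * (\<Sum>a<n. x a)\<^sup>2 = (\<Sum>a<n. \<Sum>b<n. c * (x a * x b))"
proof -
  have "(\<Sum>a<n. x a)\<^sup>2 = (\<Sum>a<n. \<Sum>b<n. x a * x b)"
    unfolding power2_eq_square by (rule sum_product)
  thus ?thesis by (simp add: sum_distrib_left)
qed

lemma quad_form_congruence_diag_nonneg:
  fixes Y :: "real mat"
  assumes Y: "Y \<in> carrier_mat n n" and g: "\<And>l. l < n \<Longrightarrow> g l \<ge> 0"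
  shows "0 \<le> quad_form n (transpose_mat Y * mat_diag n g * Y) f"
proof -
  have entry: "(transpose_mat Y * mat_diag n g * Y) $$ (a,b) = (\<Sum>l<n. g l * Y $$ (l,a) * Y $$ (l,b))"
    if "a < n" "b < n" for a b
  proof -
    have "(transpose_mat Y * mat_diag n g * Y) $$ (a,b) =
          (\<Sum>l<n. \<Sum>m<n. if m = l then g l * Y $$ (l,a) * Y $$ (l,b) else 0)"
      unfolding index_congruence_mat_sum[OF Y mat_diag_dim that]
      by (intro sum.cong refl) (auto simp: mat_diag_def)
    thus ?thesis by simp
  qed
  have "quad_form n (transpose_mat Y * mat_diag n g * Y) f =
        (\<Sum>a<n. \<Sum>b<n. \<Sum>l<n. g l * ((Y $$ (l,a) * f a) * (Y $$ (l,b) * f b)))"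
    unfolding quad_form_def
    by (intro sum.cong refl) (simp add: entry sum_distrib_left sum_distrib_right mult_ac)
  also have "\<dots> = (\<Sum>l<n. \<Sum>a<n. \<Sum>b<n. g l * ((Y $$ (l,a) * f a) * (Y $$ (l,b) * f b)))"
    by (subst sum.swap) (rule sum.cong[OF refl], rule sum.swap)
  also have "\<dots> = (\<Sum>l<n. g l * (\<Sum>a<n. Y $$ (l,a) * f a)\<^sup>2)"
    by (simp only: sum_square_distrib)
  also have "\<dots> \<ge> 0" by (intro sum_nonneg mult_nonneg_nonneg) (auto intro: g)
  finally show ?thesis .
qed

text \<open>Along the line \<open>x + t S x\<close> the form has slope \<open>2 |S x|\<^sup>2\<close> at \<open>t = 0\<close>, where it vanishes;
  nonnegativity therefore forces \<open>S x = 0\<close>.\<close>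

lemma psd_quad_form_eq_0_imp_mult_eq_0:
  fixes S :: "real mat"
  assumes sym: "\<And>a b. a < n \<Longrightarrow> b < n \<Longrightarrow> S $$ (a,b) = S $$ (b,a)"
    and psd: "\<And>f. 0 \<le> quad_form n S f" and x: "quad_form n S x = 0" and a: "a < n"
  shows "(\<Sum>b<n. S $$ (a,b) * x b) = 0"
proof -
  define u where "u = (\<lambda>a. \<Sum>b<n. S $$ (a,b) * x b)"
  define U where "U = (\<Sum>a<n. (u a)\<^sup>2)"
  define R where "R = quad_form n S u"
  have R: "R \<ge> 0" using psd by (simp add: R_def)
  have line: "quad_form n S (\<lambda>a. x a + t * u a) = 2 * t * U + t\<^sup>2 * R" for t
  proof -
    have "quad_form n S (\<lambda>a. x a + t * u a) = quad_form n S x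
       + t * (\<Sum>a<n. \<Sum>b<n. u a * S $$ (a,b) * x b)
       + t * (\<Sum>a<n. \<Sum>b<n. x a * S $$ (a,b) * u b) + t\<^sup>2 * quad_form n S u"
      unfolding quad_form_def
      by (simp add: sum.distrib sum_distrib_left algebra_simps power2_eq_square)
    also have "(\<Sum>a<n. \<Sum>b<n. u a * S $$ (a,b) * x b) = U"
      unfolding U_def u_def by (simp add: sum_distrib_left mult.assoc power2_eq_square)
    also have "(\<Sum>a<n. \<Sum>b<n. x a * S $$ (a,b) * u b) = (\<Sum>b<n. u b * (\<Sum>a<n. S $$ (b,a) * x a))"
      by (subst sum.swap) (auto simp: sum_distrib_left sym mult.commute mult.left_commute intro!: sum.cong)
    also have "\<dots> = U" unfolding U_def u_def by (simp add: power2_eq_square)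
    finally show ?thesis using x R_def by simp
  qed
  have "U = 0"
  proof (rule ccontr)
    assume "U \<noteq> 0"
    hence U: "U > 0" unfolding U_def by (metis sum_nonneg zero_le_power2 order_le_neq_trans)
    define t where "t = - U / (R + 1)"
    have "t < 0" using U R by (simp add: t_def divide_neg_pos)
    moreover have "2 * U + t * R > 0"
    proof -
      have "R / (R + 1) \<le> 1" using R by simp
      hence "U * (R / (R + 1)) \<le> U * 1" using U by (intro mult_left_mono) auto
      moreover have "t * R = - (U * (R / (R + 1)))" by (simp add: t_def)
      ultimately show ?thesis using U by linarith
    qed
    ultimately have "t * (2 * U + t * R) < 0" by (simp add: mult_neg_pos)
    hence "quad_form n S (\<lambda>a. x a + t * u a) < 0"
      unfolding line by (simp add: algebra_simps power2_eq_square)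
    with psd show False by (metis not_le)
  qed
  hence "\<forall>a\<in>{..<n}. (u a)\<^sup>2 = 0" unfolding U_def by (subst sum_nonneg_eq_0_iff[symmetric]) auto
  thus ?thesis using a by (simp add: u_def)
qed

definition mat_trace :: "nat \<Rightarrow> real mat \<Rightarrow> real" where
  "mat_trace n A = (\<Sum>i<n. A $$ (i,i))"

lemma mat_trace_mult_comm:
  assumes A: "A \<in> carrier_mat n p" and B: "B \<in> carrier_mat p n"
  shows "mat_trace n (A * B) = mat_trace p (B * A)"
proof -
  have "mat_trace n (A * B) = (\<Sum>i<n. \<Sum>k<p. A $$ (i,k) * B $$ (k,i))"
    unfolding mat_trace_def by (intro sum.cong refl) (simp add: index_mult_mat_sum[OF A B])
  also have "\<dots> = (\<Sum>k<p. \<Sum>i<n. B $$ (k,i) * A $$ (i,k))"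
    by (subst sum.swap) (simp add: mult.commute)
  also have "\<dots> = mat_trace p (B * A)"
    unfolding mat_trace_def by (intro sum.cong refl) (simp add: index_mult_mat_sum[OF B A])
  finally show ?thesis .
qed

lemma mat_trace_add:
  "A \<in> carrier_mat n n \<Longrightarrow> B \<in> carrier_mat n n \<Longrightarrow> mat_trace n (A + B) = mat_trace n A + mat_trace n B"
  unfolding mat_trace_def by (simp add: sum.distrib)

lemma mat_trace_congruence:
  assumes D: "D \<in> carrier_mat n n" and S: "S \<in> carrier_mat n n"
    and Dsym: "\<And>a b. a < n \<Longrightarrow> b < n \<Longrightarrow> D $$ (a,b) = D $$ (b,a)"
  shows "mat_trace n (D * (S * D)) = (\<Sum>i<n. quad_form n S (\<lambda>a. D $$ (a,i)))"
proof -
  have SD: "S * D \<in> carrier_mat n n" using S D by simp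
  show ?thesis
    unfolding mat_trace_def quad_form_def
    by (intro sum.cong refl)
      (auto simp: index_mult_mat_sum[OF D SD] index_mult_mat_sum[OF S D] sum_distrib_left mult.assoc Dsym)
qed

text \<open>If \<open>S\<^sup>2 = T\<^sup>2\<close> then \<open>S D + D T = 0\<close> for \<open>D = S - T\<close>, so
  \<open>tr (D S D) + tr (D T D) = tr (D (S D + D T)) = 0\<close> with both traces nonnegative.\<close>

lemma psd_square_roots_trace_zero:
  fixes S T :: "real mat"
  assumes S: "S \<in> carrier_mat n n" and T: "T \<in> carrier_mat n n"
    and Ssym: "\<And>a b. a < n \<Longrightarrow> b < n \<Longrightarrow> S $$ (a,b) = S $$ (b,a)"
    and Tsym: "\<And>a b. a < n \<Longrightarrow> b < n \<Longrightarrow> T $$ (a,b) = T $$ (b,a)"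
    and eq: "S * S = T * T"
  shows "mat_trace n ((S - T) * (S * (S - T))) + mat_trace n ((S - T) * (T * (S - T))) = 0"
proof -
  define D where "D = S - T"
  have D: "D \<in> carrier_mat n n" using S T by (simp add: D_def minus_carrier_mat)
  have Dij: "D $$ (i,j) = S $$ (i,j) - T $$ (i,j)" if "i < n" "j < n" for i j
    using that S T by (simp add: D_def)
  have E0: "S * D + D * T = 0\<^sub>m n n"
  proof (rule eq_matI)
    fix i j assume "i < dim_row (0\<^sub>m n n :: real mat)" "j < dim_col (0\<^sub>m n n :: real mat)"
    hence i: "i < n" and j: "j < n" by auto
    have "(S * D + D * T) $$ (i,j) = (\<Sum>l<n. S $$ (i,l) * D $$ (l,j)) + (\<Sum>l<n. D $$ (i,l) * T $$ (l,j))"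
      using S D T i j by (simp add: index_mult_mat_sum[OF S D i j] index_mult_mat_sum[OF D T i j])
    also have "\<dots> = (\<Sum>l<n. S $$ (i,l) * S $$ (l,j)) - (\<Sum>l<n. T $$ (i,l) * T $$ (l,j))"
      using i j by (simp add: Dij algebra_simps sum.distrib sum_subtractf)
    also have "\<dots> = 0"
      using arg_cong[OF eq, of "\<lambda>M. M $$ (i,j)"]
      by (simp add: index_mult_mat_sum[OF S S i j] index_mult_mat_sum[OF T T i j])
    finally show "(S * D + D * T) $$ (i,j) = 0\<^sub>m n n $$ (i,j)" using i j by simp
  qed (use S D T in auto)
  have "mat_trace n (D * (S * D + D * T)) = 0" using E0 D by (simp add: mat_trace_def)
  moreover have "D * (S * D + D * T) = D * (S * D) + D * (D * T)"
    using S D T by (intro mult_add_distrib_mat[of _ n n]) auto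
  moreover have "mat_trace n (D * (D * T)) = mat_trace n (D * (T * D))"
  proof -
    have "mat_trace n (D * (D * T)) = mat_trace n ((D * T) * D)"
      by (rule mat_trace_mult_comm) (use D T in auto)
    also have "(D * T) * D = D * (T * D)" using D T by (simp add: assoc_mult_mat[of _ n n _ n _ n])
    finally show ?thesis .
  qed
  moreover have "mat_trace n (D * (S * D) + D * (D * T)) =
                 mat_trace n (D * (S * D)) + mat_trace n (D * (D * T))"
    by (rule mat_trace_add) (use D S T in auto)
  ultimately have "mat_trace n (D * (S * D)) + mat_trace n (D * (T * D)) = 0" by simp
  thus ?thesis by (simp only: D_def)
qed

lemma psd_sqrt_unique:
  fixes S T :: "real mat"
  assumes S: "S \<in> carrier_mat n n" and T: "T \<in> carrier_mat n n"
    and Ssym: "\<And>a b. a < n \<Longrightarrow> b < n \<Longrightarrow> S $$ (a,b) = S $$ (b,a)"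
    and Tsym: "\<And>a b. a < n \<Longrightarrow> b < n \<Longrightarrow> T $$ (a,b) = T $$ (b,a)"
    and Spsd: "\<And>f. 0 \<le> quad_form n S f" and Tpsd: "\<And>f. 0 \<le> quad_form n T f"
    and eq: "S * S = T * T"
  shows "S = T"
proof -
  define D where "D = S - T"
  have D: "D \<in> carrier_mat n n" using S T by (simp add: D_def minus_carrier_mat)
  have Dij: "D $$ (i,j) = S $$ (i,j) - T $$ (i,j)" if "i < n" "j < n" for i j
    using that S T by (simp add: D_def)
  have Dsym: "D $$ (a,b) = D $$ (b,a)" if "a < n" "b < n" for a b
    using that Ssym Tsym Dij by simp
  let ?col = "\<lambda>i a. D $$ (a,i)"
  have "(\<Sum>i<n. quad_form n S (?col i) + quad_form n T (?col i)) = 0"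
    using psd_square_roots_trace_zero[OF S T Ssym Tsym eq]
    by (simp add: D_def[symmetric] mat_trace_congruence[OF D S Dsym] mat_trace_congruence[OF D T Dsym]
        sum.distrib)
  hence "quad_form n S (?col i) + quad_form n T (?col i) = 0" if "i < n" for i
    using that by (subst (asm) sum_nonneg_eq_0_iff) (auto intro: add_nonneg_nonneg Spsd Tpsd)
  hence qS: "quad_form n S (?col i) = 0" and qT: "quad_form n T (?col i) = 0" if "i < n" for i
    using that Spsd[of "?col i"] Tpsd[of "?col i"] by force+
  have DD: "(\<Sum>b<n. D $$ (a,b) * D $$ (b,i)) = 0" if a: "a < n" and i: "i < n" for a i
  proof -
    have "(\<Sum>b<n. D $$ (a,b) * D $$ (b,i)) =
          (\<Sum>b<n. S $$ (a,b) * D $$ (b,i)) - (\<Sum>b<n. T $$ (a,b) * D $$ (b,i))"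
      using a by (simp add: Dij algebra_simps sum_subtractf)
    thus ?thesis
      using psd_quad_form_eq_0_imp_mult_eq_0[OF Ssym Spsd qS[OF i] a]
        psd_quad_form_eq_0_imp_mult_eq_0[OF Tsym Tpsd qT[OF i] a] by simp
  qed
  have "(\<Sum>i<n. \<Sum>b<n. (D $$ (i,b))\<^sup>2) = 0"
    using DD by (simp add: Dsym power2_eq_square)
  hence "\<forall>i<n. \<forall>b<n. D $$ (i,b) = 0" by (simp add: sum_nonneg_eq_0_iff sum_nonneg)
  thus ?thesis using S T Dij by (intro eq_matI) auto
qed

lemma psd_mat_spectral_decomposition:
  fixes M :: "real mat"
  assumes M: "M \<in> carrier_mat n n" and MT: "transpose_mat M = M"
    and psd: "\<And>f. 0 \<le> quad_form n M f"
  obtains Z f where "Z \<in> carrier_mat n n" and "transpose_mat Z * Z = 1\<^sub>m n"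
    and "M = Z * mat_diag n f * transpose_mat Z" and "\<And>i. i < n \<Longrightarrow> 0 \<le> f i"
proof -
  obtain Z f where Z: "Z \<in> carrier_mat n n" and ZZ: "transpose_mat Z * Z = 1\<^sub>m n"
    and diag: "transpose_mat Z * M * Z = mat_diag n f"
    using symmetric_mat_orthogonal_diagonalization[OF M MT] .
  have ZT: "transpose_mat Z \<in> carrier_mat n n" using Z by simp
  have ZZ': "Z * transpose_mat Z = 1\<^sub>m n" by (rule mat_mult_left_right_inverse[OF ZT Z ZZ])
  have "f i = quad_form n M (\<lambda>a. Z $$ (a,i))" if i: "i < n" for i
    using arg_cong[OF diag, of "\<lambda>B. B $$ (i,i)"] i
    unfolding quad_form_def index_congruence_mat_sum[OF Z M i i] by (simp add: mat_diag_def)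
  hence "0 \<le> f i" if "i < n" for i using psd that by simp
  moreover have "Z * mat_diag n f * transpose_mat Z = (Z * transpose_mat Z) * M * (Z * transpose_mat Z)"
    unfolding diag[symmetric] using Z M by (simp add: assoc_mult_mat[of _ n n _ n _ n])
  hence "M = Z * mat_diag n f * transpose_mat Z" using ZZ' M by simp
  ultimately show ?thesis using that Z ZZ by blast
qed

lemma psd_sqrt_exists:
  fixes M :: "real mat"
  assumes M: "M \<in> carrier_mat n n" and MT: "transpose_mat M = M"
    and psd: "\<And>f. 0 \<le> quad_form n M f"
  shows "\<exists>S. S \<in> carrier_mat n n \<and> transpose_mat S = S \<and>
      (\<forall>v \<in> carrier_vec n. 0 \<le> v \<bullet> (S *\<^sub>v v)) \<and> S * S = M"
proof -
  obtain Z f where Z: "Z \<in> carrier_mat n n" and ZZ: "transpose_mat Z * Z = 1\<^sub>m n"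
    and M_eq: "M = Z * mat_diag n f * transpose_mat Z" and f: "\<And>i. i < n \<Longrightarrow> 0 \<le> f i"
    using psd_mat_spectral_decomposition[OF M MT psd] by blast
  have ZT: "transpose_mat Z \<in> carrier_mat n n" using Z by simp
  define D where "D = mat_diag n (\<lambda>i. sqrt (f i))"
  have D: "D \<in> carrier_mat n n" by (simp add: D_def)
  define S where "S = Z * D * transpose_mat Z"
  have S: "S \<in> carrier_mat n n" using Z D by (simp add: S_def)
  have "S * S = Z * (D * (transpose_mat Z * Z) * D) * transpose_mat Z"
    unfolding S_def using Z D by (simp add: assoc_mult_mat[of _ n n _ n _ n])
  also have "D * (transpose_mat Z * Z) * D = D * D" using D by (simp add: ZZ)
  also have "D * D = mat_diag n f"
    unfolding D_def mat_diag_diag by (rule eq_matI) (auto simp: mat_diag_def f)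
  finally have "S * S = M" using M_eq by simp
  moreover have "transpose_mat S = S"
    using transpose_congruence_mat[OF mat_diag_dim transpose_mat_diag ZT, of "\<lambda>i. sqrt (f i)"]
    by (simp add: S_def D_def)
  moreover have "0 \<le> v \<bullet> (S *\<^sub>v v)" if v: "v \<in> carrier_vec n" for v
    using scalar_prod_mult_mat_vec_eq_quad_form[OF S v]
      quad_form_congruence_diag_nonneg[OF ZT, of "\<lambda>i. sqrt (f i)"] f by (simp add: S_def D_def)
  ultimately show ?thesis using S by blast
qed

lemma psd_sqrt_correct:
  fixes M :: "real mat"
  assumes M: "M \<in> carrier_mat n n" and MT: "transpose_mat M = M"
    and psd: "\<forall>v \<in> carrier_vec n. 0 \<le> v \<bullet> (M *\<^sub>v v)"
  shows "psd_sqrt M \<in> carrier_mat n n" and "transpose_mat (psd_sqrt M) = psd_sqrt M"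
    and "psd_sqrt M * psd_sqrt M = M"
proof -
  let ?P = "\<lambda>S. S \<in> carrier_mat n n \<and> transpose_mat S = S \<and>
      (\<forall>v \<in> carrier_vec n. 0 \<le> v \<bullet> (S *\<^sub>v v)) \<and> S * S = M"
  obtain S0 where S0: "?P S0"
    using psd_sqrt_exists[OF M MT psd_imp_quad_form_nonneg[OF M psd]] by blast
  have uniq: "S = T" if S: "?P S" and T: "?P T" for S T
  proof (rule psd_sqrt_unique[of S n T])
    show "S $$ (i,j) = S $$ (j,i)" "T $$ (i,j) = T $$ (j,i)" if "i < n" "j < n" for i j
      using symmetric_mat_entry[of S n i j] symmetric_mat_entry[of T n i j] S T that by simp_all
    show "0 \<le> quad_form n S f" "0 \<le> quad_form n T f" for f
      using psd_imp_quad_form_nonneg[of S n] psd_imp_quad_form_nonneg[of T n] S T by simp_all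
  qed (use S T in simp_all)
  have "psd_sqrt M = S0"
    unfolding psd_sqrt_def carrier_matD(1)[OF M] by (rule the_equality) (rule S0, rule uniq[OF _ S0])
  thus "psd_sqrt M \<in> carrier_mat n n" "transpose_mat (psd_sqrt M) = psd_sqrt M"
    "psd_sqrt M * psd_sqrt M = M" using S0 by auto
qed

lemma psd_sqrt_gram:
  fixes A :: "real mat"
  assumes A: "A \<in> carrier_mat d K"
  shows "psd_sqrt (transpose_mat A * A) \<in> carrier_mat K K"
    and "transpose_mat (psd_sqrt (transpose_mat A * A)) = psd_sqrt (transpose_mat A * A)"
proof -
  define C where "C = transpose_mat A * A"
  have C: "C \<in> carrier_mat K K" using A by (simp add: C_def)
  have CT: "transpose_mat C = C"
    unfolding C_def using transpose_mult[of "transpose_mat A" K d A K] A by simp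
  have "\<forall>v\<in>carrier_vec K. 0 \<le> v \<bullet> (C *\<^sub>v v)"
  proof
    fix v :: "real vec" assume v: "v \<in> carrier_vec K"
    show "0 \<le> v \<bullet> (C *\<^sub>v v)"
      using scalar_prod_mult_mat_vec_eq_quad_form[OF C v] quad_form_gram_nonneg[OF A]
      by (simp add: C_def)
  qed
  from psd_sqrt_correct[OF C CT this]
  show "psd_sqrt (transpose_mat A * A) \<in> carrier_mat K K"
    and "transpose_mat (psd_sqrt (transpose_mat A * A)) = psd_sqrt (transpose_mat A * A)"
    by (simp_all add: C_def)
qed

text \<open>A \<open>d \<times> K\<close> matrix is represented entrywise by \<open>x :: nat \<Rightarrow> nat \<Rightarrow> real\<close>, \<open>x r j\<close> being
  the entry in row \<open>r\<close> and column \<open>j\<close>; its \<open>j\<close>-th column is \<open>\<lambda>r. x r j\<close>.\<close>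

definition col_dot :: "nat \<Rightarrow> (nat \<Rightarrow> real) \<Rightarrow> (nat \<Rightarrow> real) \<Rightarrow> real" where
  "col_dot d u v = (\<Sum>r<d. u r * v r)"

abbreviation col_norm :: "nat \<Rightarrow> (nat \<Rightarrow> real) \<Rightarrow> real" where
  "col_norm d u \<equiv> L2_set u {..<d}"

lemma col_norm_sq: "(col_norm d u)\<^sup>2 = (\<Sum>r<d. (u r)\<^sup>2)"
  unfolding L2_set_def by (simp add: sum_nonneg)

lemma col_dot_commute: "col_dot d u v = col_dot d v u"
  unfolding col_dot_def by (simp add: mult.commute)

lemma col_dot_sum_right: "col_dot d u (\<lambda>r. \<Sum>k<K. f k r) = (\<Sum>k<K. col_dot d u (f k))"
  unfolding col_dot_def by (simp add: sum_distrib_left) (rule sum.swap)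

lemma col_dot_diff_right: "col_dot d u (\<lambda>r. f r - g r) = col_dot d u f - col_dot d u g"
  unfolding col_dot_def by (simp add: algebra_simps sum_subtractf)

lemma col_dot_add_right: "col_dot d u (\<lambda>r. f r + g r) = col_dot d u f + col_dot d u g"
  unfolding col_dot_def by (simp add: algebra_simps sum.distrib)

lemma col_dot_scale_right: "col_dot d u (\<lambda>r. t * f r) = t * col_dot d u f"
  unfolding col_dot_def sum_distrib_left by (intro sum.cong refl) (simp add: mult_ac)

lemma col_dot_scale_right': "col_dot d u (\<lambda>r. f r * t) = col_dot d u f * t"
  unfolding col_dot_def sum_distrib_right by (intro sum.cong refl) (simp add: mult_ac)

lemma col_dot_Cauchy_Schwarz: "\<bar>col_dot d u v\<bar> \<le> col_norm d u * col_norm d v"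
proof -
  have "\<bar>col_dot d u v\<bar> \<le> (\<Sum>r<d. \<bar>u r\<bar> * \<bar>v r\<bar>)"
    unfolding col_dot_def by (rule order_trans[OF sum_abs]) (simp add: abs_mult)
  also have "\<dots> \<le> col_norm d u * col_norm d v" by (rule L2_set_mult_ineq)
  finally show ?thesis .
qed

lemma col_norm_scale: "col_norm d (\<lambda>r. t * f r) = \<bar>t\<bar> * col_norm d f"
proof -
  have "col_norm d (\<lambda>r. t * f r) = sqrt (t\<^sup>2 * (\<Sum>r<d. (f r)\<^sup>2))"
    unfolding L2_set_def by (simp add: power_mult_distrib sum_distrib_left)
  also have "\<dots> = \<bar>t\<bar> * col_norm d f" unfolding L2_set_def by (simp add: real_sqrt_mult)
  finally show ?thesis .
qed

lemma col_norm_uminus: "col_norm d (\<lambda>r. - f r) = col_norm d f"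
  using col_norm_scale[where t="-1" and f=f and d=d] by simp

lemma col_norm_diff_le: "col_norm d (\<lambda>r. f r - g r) \<le> col_norm d f + col_norm d g"
  using L2_set_triangle_ineq[of f "\<lambda>r. - g r" "{..<d}"] col_norm_uminus[where d=d and f=g] by simp

lemma col_norm_sum_le: "col_norm d (\<lambda>r. \<Sum>k<(n::nat). f k r) \<le> (\<Sum>k<n. col_norm d (f k))"
proof (induction n)
  case 0 then show ?case by (simp add: L2_set_def)
next
  case (Suc n)
  have "col_norm d (\<lambda>r. \<Sum>k<Suc n. f k r) \<le> col_norm d (\<lambda>r. \<Sum>k<n. f k r) + col_norm d (f n)"
    using L2_set_triangle_ineq[of "\<lambda>r. \<Sum>k<n. f k r" "f n" "{..<d}"] by simp
  then show ?case using Suc by simp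
qed

lemma col_norm_mono_sq: "(\<Sum>r<d. (u r)\<^sup>2) \<le> (\<Sum>r<d. (v r)\<^sup>2) \<Longrightarrow> col_norm d u \<le> col_norm d v"
  unfolding L2_set_def by simp

lemma col_norm_le_frobenius:
  "(j::nat) < K \<Longrightarrow> col_norm d (\<lambda>r. F r j) \<le> sqrt (\<Sum>r<d. \<Sum>j<K. (F r j)\<^sup>2)"
  unfolding L2_set_def by (intro real_sqrt_le_mono sum_mono member_le_sum) auto

lemma frobenius_le_sum_col_norms:
  fixes F :: "nat \<Rightarrow> nat \<Rightarrow> real" and K :: nat
  shows "sqrt (\<Sum>r<d. \<Sum>j<K. (F r j)\<^sup>2) \<le> (\<Sum>j<K. col_norm d (\<lambda>r. F r j))"
proof -
  have "sqrt (\<Sum>r<d. \<Sum>j<K. (F r j)\<^sup>2) = L2_set (\<lambda>j. col_norm d (\<lambda>r. F r j)) {..<K}"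
    unfolding L2_set_def[of "\<lambda>j. col_norm d (\<lambda>r. F r j)"] col_norm_sq by (subst sum.swap) simp
  also have "\<dots> \<le> (\<Sum>j<K. \<bar>col_norm d (\<lambda>r. F r j)\<bar>)" by (rule L2_set_le_sum_abs)
  finally show ?thesis by simp
qed

lemma orthonormal_projection_residual_sq:
  fixes u :: "nat \<Rightarrow> nat \<Rightarrow> real"
  assumes orth: "\<And>i j. i < K \<Longrightarrow> j < K \<Longrightarrow>
                   col_dot d (\<lambda>r. u r i) (\<lambda>r. u r j) = (if i = j then 1 else 0)"
  shows "(\<Sum>r<d. (p r - (\<Sum>k<K. u r k * col_dot d (\<lambda>r. u r k) p))\<^sup>2)
       = (\<Sum>r<d. (p r)\<^sup>2) - (\<Sum>k<K. (col_dot d (\<lambda>r. u r k) p)\<^sup>2)"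
proof -
  define \<beta> where "\<beta> = (\<lambda>k. col_dot d (\<lambda>r. u r k) p)"
  have mixed: "(\<Sum>r<d. p r * (\<Sum>k<K. u r k * \<beta> k)) = (\<Sum>k<K. (\<beta> k)\<^sup>2)"
  proof -
    have "(\<Sum>r<d. p r * (\<Sum>k<K. u r k * \<beta> k)) = (\<Sum>k<K. \<Sum>r<d. \<beta> k * (u r k * p r))"
      by (subst sum.swap) (simp add: sum_distrib_left mult_ac)
    also have "\<dots> = (\<Sum>k<K. (\<beta> k)\<^sup>2)"
      by (simp add: \<beta>_def col_dot_def power2_eq_square sum_distrib_left)
    finally show ?thesis .
  qed
  have square: "(\<Sum>r<d. (\<Sum>k<K. u r k * \<beta> k)\<^sup>2) = (\<Sum>k<K. (\<beta> k)\<^sup>2)"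
  proof -
    have "(\<Sum>r<d. (\<Sum>k<K. u r k * \<beta> k)\<^sup>2) = (\<Sum>r<d. \<Sum>k<K. \<Sum>l<K. \<beta> k * \<beta> l * (u r k * u r l))"
      by (intro sum.cong refl) (simp add: power2_eq_square sum_product mult_ac)
    also have "\<dots> = (\<Sum>k<K. \<Sum>l<K. \<Sum>r<d. \<beta> k * \<beta> l * (u r k * u r l))"
      by (subst sum.swap) (rule sum.cong[OF refl], rule sum.swap)
    also have "\<dots> = (\<Sum>k<K. \<Sum>l<K. \<beta> k * \<beta> l * col_dot d (\<lambda>r. u r k) (\<lambda>r. u r l))"
      by (simp add: col_dot_def sum_distrib_left)
    also have "\<dots> = (\<Sum>k<K. \<Sum>l<K. if l = k then \<beta> k * \<beta> k else 0)"
      by (intro sum.cong refl) (auto simp: orth)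
    finally show ?thesis by (simp add: power2_eq_square)
  qed
  have "(\<Sum>r<d. (p r - (\<Sum>k<K. u r k * \<beta> k))\<^sup>2)
     = (\<Sum>r<d. (p r)\<^sup>2) - 2 * (\<Sum>r<d. p r * (\<Sum>k<K. u r k * \<beta> k)) + (\<Sum>r<d. (\<Sum>k<K. u r k * \<beta> k)\<^sup>2)"
    by (simp add: power2_diff sum.distrib sum_subtractf sum_distrib_left mult.assoc)
  also have "\<dots> = (\<Sum>r<d. (p r)\<^sup>2) - (\<Sum>k<K. (\<beta> k)\<^sup>2)" using mixed square by simp
  finally show ?thesis by (simp add: \<beta>_def)
qed

lemma orthonormal_projection_residual_le:
  fixes u :: "nat \<Rightarrow> nat \<Rightarrow> real"
  assumes "\<And>i j. i < K \<Longrightarrow> j < K \<Longrightarrow>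
             col_dot d (\<lambda>r. u r i) (\<lambda>r. u r j) = (if i = j then 1 else 0)"
  shows "col_norm d (\<lambda>r. p r - (\<Sum>k<K. u r k * col_dot d (\<lambda>r. u r k) p)) \<le> col_norm d p"
  by (rule col_norm_mono_sq) (simp add: orthonormal_projection_residual_sq[OF assms] sum_nonneg)

section \<open>Perturbation identities\<close>

text \<open>\<open>x\<close> and \<open>q\<close> are \<open>d \<times> K\<close> matrices with orthonormal columns (\<open>X\<close>, and \<open>Q\<close> with its columns
  multiplied by signs), \<open>lam\<close> and \<open>a\<close> the diagonals of \<open>\<Lambda> = \<Theta>\<^sup>2\<close> and \<open>D\<close>, and \<open>P\<close> stands for
  \<open>(A\<^sup>T A)\<^sup>1\<^sup>/\<^sup>2\<close>, of which only the symmetry matters.\<close>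

locale frame_perturbation =
  fixes d K :: nat and x q :: "nat \<Rightarrow> nat \<Rightarrow> real" and lam a :: "nat \<Rightarrow> real"
    and P :: "nat \<Rightarrow> nat \<Rightarrow> real" and \<alpha> :: real
  assumes x_orthonormal: "\<And>i j. i < K \<Longrightarrow> j < K \<Longrightarrow>
                            col_dot d (\<lambda>r. x r i) (\<lambda>r. x r j) = (if i = j then 1 else 0)"
    and q_orthonormal: "\<And>i j. i < K \<Longrightarrow> j < K \<Longrightarrow>
                            col_dot d (\<lambda>r. q r i) (\<lambda>r. q r j) = (if i = j then 1 else 0)"
    and P_symmetric: "\<And>i j. i < K \<Longrightarrow> j < K \<Longrightarrow> P i j = P j i"
begin

text \<open>In matrix notation: \<open>overlap = Q\<^sup>T X\<close>, \<open>err = X - Q\<close>, \<open>err_coord = Q\<^sup>T (X - Q)\<close>,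
  \<open>weighted_gram = X\<^sup>T Q \<Lambda> Q\<^sup>T X\<close>, \<open>weighted_proj = Q \<Lambda> Q\<^sup>T X\<close>,
  \<open>residual = X P - (\<alpha> X + Q \<Lambda> Q\<^sup>T X D)\<close>, \<open>weighted_proj_perp = (I - X X\<^sup>T) Q \<Lambda> Q\<^sup>T X\<close> and
  \<open>x_perp = (I - Q Q\<^sup>T) X\<close>.\<close>

definition "overlap i j = col_dot d (\<lambda>r. q r i) (\<lambda>r. x r j)"
definition "err r j = x r j - q r j"
definition "err_coord i j = col_dot d (\<lambda>r. q r i) (\<lambda>r. err r j)"
definition "weighted_gram i j = (\<Sum>l<K. lam l * overlap l i * overlap l j)"
definition "weighted_proj r j = (\<Sum>l<K. (lam l * overlap l j) * q r l)"
definition "residual r j = (\<Sum>k<K. x r k * P k j) - (\<alpha> * x r j + a j * weighted_proj r j)"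
definition "weighted_proj_perp r j = weighted_proj r j - (\<Sum>k<K. x r k * weighted_gram k j)"
definition "x_perp r j = x r j - (\<Sum>i<K. q r i * overlap i j)"

lemma overlap_eq_err_coord:
  "i < K \<Longrightarrow> j < K \<Longrightarrow> overlap i j = err_coord i j + (if i = j then 1 else 0)"
  unfolding overlap_def err_coord_def err_def using q_orthonormal col_dot_diff_right by simp

lemma weighted_gram_sym: "weighted_gram i j = weighted_gram j i"
  unfolding weighted_gram_def by (simp add: mult_ac)

lemma col_dot_x_weighted_proj:
  "i < K \<Longrightarrow> j < K \<Longrightarrow> col_dot d (\<lambda>r. x r i) (\<lambda>r. weighted_proj r j) = weighted_gram i j"
  unfolding weighted_proj_def col_dot_sum_right col_dot_scale_right weighted_gram_def overlap_def
  by (intro sum.cong refl) (simp add: col_dot_commute mult_ac)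

lemma col_dot_x_residual:
  assumes ij: "i < K" "j < K"
  shows "col_dot d (\<lambda>r. x r i) (\<lambda>r. residual r j) =
         P i j - \<alpha> * (if i = j then 1 else 0) - a j * weighted_gram i j"
proof -
  have "col_dot d (\<lambda>r. x r i) (\<lambda>r. \<Sum>k<K. x r k * P k j) =
        (\<Sum>k<K. P k j * (if k = i then 1 else 0))"
    unfolding col_dot_sum_right col_dot_scale_right' using ij by (intro sum.cong refl) (auto simp: x_orthonormal)
  also have "\<dots> = P i j" by (rule sum_mult_delta[OF ij(1)])
  finally show ?thesis
    unfolding residual_def col_dot_diff_right col_dot_add_right col_dot_scale_right
      col_dot_x_weighted_proj[OF ij] x_orthonormal[OF ij] by simp
qed

lemma residual_minus_proj_x:
  assumes j: "j < K"
  shows "residual r j - (\<Sum>k<K. x r k * col_dot d (\<lambda>r. x r k) (\<lambda>r. residual r j)) =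
         - a j * weighted_proj_perp r j"
proof -
  have "(\<Sum>k<K. x r k * col_dot d (\<lambda>r. x r k) (\<lambda>r. residual r j))
     = (\<Sum>k<K. x r k * P k j) - \<alpha> * (\<Sum>k<K. x r k * (if k = j then 1 else 0))
       - a j * (\<Sum>k<K. x r k * weighted_gram k j)"
    using j by (simp add: col_dot_x_residual algebra_simps sum_subtractf sum_distrib_left)
  thus ?thesis
    unfolding residual_def weighted_proj_perp_def sum_mult_delta[OF j] by (simp add: algebra_simps)
qed

lemma col_dot_q_weighted_proj:
  assumes ij: "i < K" "j < K"
  shows "col_dot d (\<lambda>r. q r i) (\<lambda>r. weighted_proj r j) = lam i * overlap i j"
proof -
  have "col_dot d (\<lambda>r. q r i) (\<lambda>r. weighted_proj r j) =
        (\<Sum>l<K. (lam l * overlap l j) * (if l = i then 1 else 0))"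
    unfolding weighted_proj_def col_dot_sum_right col_dot_scale_right
    using ij by (intro sum.cong refl) (auto simp: q_orthonormal)
  also have "\<dots> = lam i * overlap i j" by (rule sum_mult_delta[OF ij(1)])
  finally show ?thesis .
qed

lemma weighted_proj_perp_minus_proj_q:
  assumes j: "j < K"
  shows "weighted_proj_perp r j - (\<Sum>i<K. q r i * col_dot d (\<lambda>r. q r i) (\<lambda>r. weighted_proj_perp r j)) =
         - (\<Sum>k<K. x_perp r k * weighted_gram k j)"
proof -
  have "(\<Sum>i<K. q r i * col_dot d (\<lambda>r. q r i) (\<lambda>r. weighted_proj_perp r j))
      = (\<Sum>i<K. q r i * (lam i * overlap i j - (\<Sum>k<K. overlap i k * weighted_gram k j)))"
    unfolding weighted_proj_perp_def col_dot_diff_right col_dot_sum_right col_dot_scale_right' overlap_def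
    by (intro sum.cong refl) (simp add: col_dot_q_weighted_proj[OF _ j, unfolded overlap_def])
  also have "\<dots> = weighted_proj r j - (\<Sum>k<K. (\<Sum>i<K. q r i * overlap i k) * weighted_gram k j)"
    unfolding weighted_proj_def
    by (simp add: right_diff_distrib sum_subtractf sum_distrib_left sum_distrib_right mult_ac
        sum.swap[of "\<lambda>i k. q r i * (overlap i k * weighted_gram k j)"])
  finally show ?thesis
    unfolding weighted_proj_perp_def x_perp_def by (simp add: left_diff_distrib sum_subtractf)
qed

lemma x_perp_eq_err:
  assumes j: "j < K"
  shows "x_perp r j = err r j - (\<Sum>i<K. q r i * err_coord i j)"
proof -
  have "(\<Sum>i<K. q r i * overlap i j) = (\<Sum>i<K. q r i * err_coord i j) + (\<Sum>i<K. q r i * (if i = j then 1 else 0))"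
    by (simp add: overlap_eq_err_coord j algebra_simps sum.distrib)
  thus ?thesis unfolding x_perp_def err_def sum_mult_delta[OF j] by simp
qed

lemma weighted_gram_expand:
  assumes kj: "k < K" "j < K"
  shows "weighted_gram k j = lam k * err_coord k j + lam j * err_coord j k +
           lam j * (if k = j then 1 else 0) + (\<Sum>l<K. lam l * err_coord l k * err_coord l j)"
proof -
  have "weighted_gram k j = (\<Sum>l<K. lam l * err_coord l k * err_coord l j)
     + (\<Sum>l<K. (lam l * err_coord l j) * (if l = k then 1 else 0))
     + (\<Sum>l<K. (lam l * err_coord l k) * (if l = j then 1 else 0))
     + (\<Sum>l<K. (lam l * (if l = k then 1 else 0)) * (if l = j then 1 else 0))"
    unfolding weighted_gram_def sum.distrib[symmetric]
    by (intro sum.cong refl) (simp add: overlap_eq_err_coord kj algebra_simps)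
  thus ?thesis unfolding sum_mult_delta[OF kj(1)] sum_mult_delta[OF kj(2)] by auto
qed

text \<open>Orthonormality of the columns of \<open>x = q + err\<close> makes \<open>err_coord\<close> skew up to a quadratic term.\<close>

lemma err_coord_skew:
  assumes ij: "i < K" "j < K"
  shows "err_coord i j + err_coord j i + col_dot d (\<lambda>r. err r i) (\<lambda>r. err r j) = 0"
proof -
  have "col_dot d (\<lambda>r. x r i) (\<lambda>r. x r j) = col_dot d (\<lambda>r. q r i + err r i) (\<lambda>r. q r j + err r j)"
    unfolding err_def by simp
  also have "\<dots> = col_dot d (\<lambda>r. q r i) (\<lambda>r. q r j) + err_coord i j + err_coord j i
                  + col_dot d (\<lambda>r. err r i) (\<lambda>r. err r j)"
    unfolding err_coord_def col_dot_def by (simp add: algebra_simps sum.distrib mult.commute)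
  finally show ?thesis using x_orthonormal[OF ij] q_orthonormal[OF ij] by simp
qed

end

locale decreasing_weights =
  fixes K :: nat and lam a :: "nat \<Rightarrow> real"
  assumes K_pos: "1 \<le> K"
    and lam_decreasing: "\<And>i j. i < j \<Longrightarrow> j < K \<Longrightarrow> lam j < lam i" and lam_last_pos: "0 < lam (K - 1)"
    and a_decreasing: "\<And>i j. i < j \<Longrightarrow> j < K \<Longrightarrow> a j < a i" and a_last_pos: "0 < a (K - 1)"
begin

lemma lam_between: "l < K \<Longrightarrow> lam (K - 1) \<le> lam l \<and> lam l \<le> lam 0"
  using lam_decreasing[of l "K - 1"] lam_decreasing[of 0 l]
  by (cases "l = K - 1"; cases "l = 0") (auto simp: less_eq_real_def)

lemma a_between: "l < K \<Longrightarrow> a (K - 1) \<le> a l \<and> a l \<le> a 0"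
  using a_decreasing[of l "K - 1"] a_decreasing[of 0 l]
  by (cases "l = K - 1"; cases "l = 0") (auto simp: less_eq_real_def)

lemma lam_pos: "l < K \<Longrightarrow> 0 < lam l"
  using lam_between lam_last_pos by force

lemma a_pos: "l < K \<Longrightarrow> 0 < a l"
  using a_between a_last_pos by force

lemma lam_neq: "i < K \<Longrightarrow> j < K \<Longrightarrow> i \<noteq> j \<Longrightarrow> lam i \<noteq> lam j"
  using lam_decreasing[of i j] lam_decreasing[of j i] by (cases "i < j") auto

lemma a_neq: "i < K \<Longrightarrow> j < K \<Longrightarrow> i \<noteq> j \<Longrightarrow> a i \<noteq> a j"
  using a_decreasing[of i j] a_decreasing[of j i] by (cases "i < j") auto

text \<open>The final bound combines \<open>\<Sum> |err_coord| \<le> offdiag_const \<rho> + quad_const \<epsilon>\<^sup>2\<close> with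
  \<open>\<Sum> |x_perp| \<le> perp_const \<rho>\<close>; within \<open>local_radius\<close> the quadratic terms can be absorbed.\<close>

definition "offdiag_const =
  (\<Sum>j<K. \<Sum>i<K. if i = j then 0 else 2 / (\<bar>a j - a i\<bar> * \<bar>lam i - lam j\<bar>))"
definition "quad_const =
  (\<Sum>j<K. \<Sum>i<K. if i = j then 1/2 else (real K + 1) * lam 0 / \<bar>lam i - lam j\<bar>)"
definition "perp_const = 2 * real K / (a (K - 1) * lam (K - 1))"
definition "local_radius =
  min 1 (min (lam (K - 1) / (2 * real K * lam 0 * (2 + real K))) (1 / (2 * quad_const + 1)))"
definition "error_bound_const = 2 * (offdiag_const + perp_const) + 1"

lemma quad_const_nonneg: "0 \<le> quad_const"
  unfolding quad_const_def using lam_pos[of 0] K_pos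
  by (intro sum_nonneg) (auto intro!: divide_nonneg_nonneg mult_nonneg_nonneg)

lemma local_radius_pos: "0 < local_radius"
  unfolding local_radius_def using lam_last_pos lam_pos[of 0] K_pos quad_const_nonneg by simp

lemma error_bound_const_pos: "0 < error_bound_const"
proof -
  have "0 \<le> offdiag_const"
    unfolding offdiag_const_def by (intro sum_nonneg) (auto intro!: divide_nonneg_nonneg)
  moreover have "0 \<le> perp_const" unfolding perp_const_def using lam_last_pos a_last_pos by simp
  ultimately show ?thesis unfolding error_bound_const_def by simp
qed

end

locale ordered_frame_perturbation = frame_perturbation + decreasing_weights K lam a
begin

definition "err_norm = sqrt (\<Sum>r<d. \<Sum>j<K. (err r j)\<^sup>2)"
definition "resid_norm = sqrt (\<Sum>r<d. \<Sum>j<K. (residual r j)\<^sup>2)"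

lemma err_norm_nonneg: "0 \<le> err_norm"
  unfolding err_norm_def by (simp add: sum_nonneg)

lemma resid_norm_nonneg: "0 \<le> resid_norm"
  unfolding resid_norm_def by (simp add: sum_nonneg)

lemma col_norm_x: "i < K \<Longrightarrow> col_norm d (\<lambda>r. x r i) = 1"
  using x_orthonormal[of i i] unfolding L2_set_def col_dot_def by (simp add: power2_eq_square)

lemma col_norm_q: "i < K \<Longrightarrow> col_norm d (\<lambda>r. q r i) = 1"
  using q_orthonormal[of i i] unfolding L2_set_def col_dot_def by (simp add: power2_eq_square)

lemma col_norm_err_le: "j < K \<Longrightarrow> col_norm d (\<lambda>r. err r j) \<le> err_norm"
  unfolding err_norm_def by (rule col_norm_le_frobenius)

lemma col_norm_residual_le: "j < K \<Longrightarrow> col_norm d (\<lambda>r. residual r j) \<le> resid_norm"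
  unfolding resid_norm_def by (rule col_norm_le_frobenius)

lemma err_coord_le_col_norm: "i < K \<Longrightarrow> j < K \<Longrightarrow> \<bar>err_coord i j\<bar> \<le> col_norm d (\<lambda>r. err r j)"
  using col_dot_Cauchy_Schwarz[of d "\<lambda>r. q r i" "\<lambda>r. err r j"] col_norm_q
  unfolding err_coord_def by simp

lemma err_coord_le: "i < K \<Longrightarrow> j < K \<Longrightarrow> \<bar>err_coord i j\<bar> \<le> err_norm"
  using err_coord_le_col_norm col_norm_err_le by (meson order_trans)

lemma col_dot_err_le: "i < K \<Longrightarrow> j < K \<Longrightarrow> \<bar>col_dot d (\<lambda>r. err r i) (\<lambda>r. err r j)\<bar> \<le> err_norm\<^sup>2"
  using col_dot_Cauchy_Schwarz[of d "\<lambda>r. err r i" "\<lambda>r. err r j"] col_norm_err_le[of i] col_norm_err_le[of j]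
    err_norm_nonneg mult_mono[of "col_norm d (\<lambda>r. err r i)" err_norm "col_norm d (\<lambda>r. err r j)" err_norm]
  by (simp add: power2_eq_square)

lemma col_dot_x_residual_le:
  "i < K \<Longrightarrow> j < K \<Longrightarrow> \<bar>P i j - \<alpha> * (if i = j then 1 else 0) - a j * weighted_gram i j\<bar> \<le> resid_norm"
  using col_dot_Cauchy_Schwarz[of d "\<lambda>r. x r i" "\<lambda>r. residual r j"] col_norm_x[of i]
    col_norm_residual_le[of j] col_dot_x_residual[of i j] by simp

text \<open>Since \<open>P\<close> is symmetric, \<open>X\<^sup>T R - R\<^sup>T X = D G - G D\<close> for the residual \<open>R\<close>.\<close>

lemma weighted_gram_offdiag_le:
  assumes ij: "i < K" "j < K"
  shows "\<bar>a j - a i\<bar> * \<bar>weighted_gram i j\<bar> \<le> 2 * resid_norm"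
proof -
  have "(a j - a i) * weighted_gram i j =
        (P j i - \<alpha> * (if j = i then 1 else 0) - a i * weighted_gram j i)
      - (P i j - \<alpha> * (if i = j then 1 else 0) - a j * weighted_gram i j)"
    using P_symmetric[OF ij] weighted_gram_sym[of j i] by (simp add: algebra_simps)
  hence "\<bar>(a j - a i) * weighted_gram i j\<bar> \<le> 2 * resid_norm"
    using col_dot_x_residual_le[OF ij] col_dot_x_residual_le[OF ij(2,1)] by (simp add: abs_le_iff)
  thus ?thesis by (simp add: abs_mult)
qed

lemma weighted_proj_perp_le:
  assumes j: "j < K"
  shows "a j * col_norm d (\<lambda>r. weighted_proj_perp r j) \<le> resid_norm"
proof -
  have "a j * col_norm d (\<lambda>r. weighted_proj_perp r j) = col_norm d (\<lambda>r. - a j * weighted_proj_perp r j)"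
    using col_norm_scale[where t="- a j" and d=d and f="\<lambda>r. weighted_proj_perp r j"] a_pos[OF j]
    by simp
  also have "\<dots> \<le> col_norm d (\<lambda>r. residual r j)"
    using orthonormal_projection_residual_le[where K=K and d=d and u=x and p="\<lambda>r. residual r j",
      OF x_orthonormal]
    by (simp add: residual_minus_proj_x[OF j])
  also have "\<dots> \<le> resid_norm" by (rule col_norm_residual_le[OF j])
  finally show ?thesis .
qed

lemma x_perp_weighted_gram_le:
  assumes j: "j < K"
  shows "a j * col_norm d (\<lambda>r. \<Sum>k<K. x_perp r k * weighted_gram k j) \<le> resid_norm"
proof -
  have "col_norm d (\<lambda>r. \<Sum>k<K. x_perp r k * weighted_gram k j) \<le> col_norm d (\<lambda>r. weighted_proj_perp r j)"
    using orthonormal_projection_residual_le[where K=K and d=d and u=q and p="\<lambda>r. weighted_proj_perp r j",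
      OF q_orthonormal]
      col_norm_uminus[where d=d and f="\<lambda>r. \<Sum>k<K. x_perp r k * weighted_gram k j"]
    by (simp add: weighted_proj_perp_minus_proj_q[OF j])
  hence "a j * col_norm d (\<lambda>r. \<Sum>k<K. x_perp r k * weighted_gram k j) \<le>
         a j * col_norm d (\<lambda>r. weighted_proj_perp r j)"
    using a_pos[OF j] by (simp add: mult_left_mono)
  also have "\<dots> \<le> resid_norm" by (rule weighted_proj_perp_le[OF j])
  finally show ?thesis .
qed

lemma col_norm_err_sq:
  assumes j: "j < K"
  shows "(col_norm d (\<lambda>r. err r j))\<^sup>2 = (\<Sum>i<K. (err_coord i j)\<^sup>2) + (col_norm d (\<lambda>r. x_perp r j))\<^sup>2"
  using orthonormal_projection_residual_sq[where K=K and d=d and u=q and p="\<lambda>r. err r j",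
    OF q_orthonormal]
  by (simp add: col_norm_sq x_perp_eq_err[OF j] err_coord_def)

lemma col_norm_err_le_split:
  assumes j: "j < K"
  shows "col_norm d (\<lambda>r. err r j) \<le> (\<Sum>i<K. \<bar>err_coord i j\<bar>) + col_norm d (\<lambda>r. x_perp r j)"
proof -
  have "col_norm d (\<lambda>r. err r j) =
        sqrt ((L2_set (\<lambda>i. err_coord i j) {..<K})\<^sup>2 + (col_norm d (\<lambda>r. x_perp r j))\<^sup>2)"
    using col_norm_err_sq[OF j] col_norm_sq[where d=K and u="\<lambda>i. err_coord i j"]
    by (metis L2_set_nonneg real_sqrt_unique)
  also have "\<dots> \<le> L2_set (\<lambda>i. err_coord i j) {..<K} + col_norm d (\<lambda>r. x_perp r j)"
    using sqrt_add_le_add_sqrt[of "(L2_set (\<lambda>i. err_coord i j) {..<K})\<^sup>2" "(col_norm d (\<lambda>r. x_perp r j))\<^sup>2"]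
    by simp
  also have "\<dots> \<le> (\<Sum>i<K. \<bar>err_coord i j\<bar>) + col_norm d (\<lambda>r. x_perp r j)"
    using L2_set_le_sum_abs by simp
  finally show ?thesis .
qed

lemma err_coord_quadratic_le:
  assumes kj: "k < K" "j < K"
  shows "\<bar>\<Sum>l<K. lam l * err_coord l k * err_coord l j\<bar> \<le> K * lam 0 * err_norm\<^sup>2"
proof -
  have "\<bar>\<Sum>l<K. lam l * err_coord l k * err_coord l j\<bar> \<le> (\<Sum>l<K. \<bar>lam l * err_coord l k * err_coord l j\<bar>)"
    by (rule sum_abs)
  also have "\<dots> \<le> (\<Sum>l<K. lam 0 * err_norm\<^sup>2)"
  proof (rule sum_mono)
    fix l assume "l \<in> {..<K}" hence l: "l < K" by simp
    have "\<bar>lam l * err_coord l k * err_coord l j\<bar> = \<bar>lam l\<bar> * (\<bar>err_coord l k\<bar> * \<bar>err_coord l j\<bar>)"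
      by (simp add: abs_mult)
    also have "\<dots> \<le> lam 0 * (err_norm * err_norm)"
      using lam_between[OF l] lam_pos[OF l] err_coord_le[OF l kj(1)] err_coord_le[OF l kj(2)]
      by (intro mult_mono) (auto intro: mult_mono)
    finally show "\<bar>lam l * err_coord l k * err_coord l j\<bar> \<le> lam 0 * err_norm\<^sup>2"
      by (simp add: power2_eq_square)
  qed
  finally show ?thesis by simp
qed

lemma weighted_gram_near_diag:
  assumes kj: "k < K" "j < K" and small: "err_norm \<le> 1"
  shows "\<bar>weighted_gram k j - lam j * (if k = j then 1 else 0)\<bar> \<le> lam 0 * (2 + K) * err_norm"
proof -
  have lin: "\<bar>lam l * err_coord l l'\<bar> \<le> lam 0 * err_norm" if "l < K" "l' < K" for l l'
    unfolding abs_mult using lam_between[OF that(1)] lam_pos[OF that(1)] err_coord_le[OF that]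
    by (intro mult_mono) auto
  have "err_norm\<^sup>2 \<le> err_norm" using small err_norm_nonneg by (simp add: power2_eq_square mult_left_le)
  hence "K * lam 0 * err_norm\<^sup>2 \<le> K * lam 0 * err_norm" using lam_pos[of 0] K_pos
    by (intro mult_left_mono) auto
  thus ?thesis
    using weighted_gram_expand[OF kj] lin[OF kj] lin[OF kj(2,1)] err_coord_quadratic_le[OF kj]
    by (simp add: algebra_simps abs_le_iff)
qed

end

context ordered_frame_perturbation
begin

text \<open>\<open>\<lambda>\<^sub>j x_perp\<^sub>j\<close> is \<open>(x_perp G)\<^sub>j\<close> up to the deviation of \<open>G\<close> from \<open>\<Lambda>\<close>.\<close>

lemma col_norm_x_perp_le:
  assumes j: "j < K" and small: "err_norm \<le> 1"
  shows "lam (K - 1) * col_norm d (\<lambda>r. x_perp r j) \<le>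
           resid_norm / a (K - 1) + lam 0 * (2 + K) * err_norm * (\<Sum>k<K. col_norm d (\<lambda>r. x_perp r k))"
proof -
  define dev where "dev k = weighted_gram k j - lam j * (if k = j then 1 else 0)" for k
  have split: "lam j * x_perp r j =
               (\<Sum>k<K. x_perp r k * weighted_gram k j) - (\<Sum>k<K. x_perp r k * dev k)" for r
    using sum_mult_delta[OF j, of "\<lambda>k. x_perp r k * lam j"]
    by (simp add: dev_def algebra_simps sum_subtractf)
  have gram_part: "col_norm d (\<lambda>r. \<Sum>k<K. x_perp r k * weighted_gram k j) \<le> resid_norm / a (K - 1)"
  proof -
    have "col_norm d (\<lambda>r. \<Sum>k<K. x_perp r k * weighted_gram k j) \<le> resid_norm / a j"
      using x_perp_weighted_gram_le[OF j] a_pos[OF j] by (simp add: field_simps)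
    also have "\<dots> \<le> resid_norm / a (K - 1)"
      using a_pos[OF j] a_between[OF j] a_last_pos resid_norm_nonneg by (intro divide_left_mono) auto
    finally show ?thesis .
  qed
  have dev_part: "col_norm d (\<lambda>r. \<Sum>k<K. x_perp r k * dev k) \<le>
                  lam 0 * (2 + K) * err_norm * (\<Sum>k<K. col_norm d (\<lambda>r. x_perp r k))"
  proof -
    have "col_norm d (\<lambda>r. \<Sum>k<K. x_perp r k * dev k) \<le> (\<Sum>k<K. \<bar>dev k\<bar> * col_norm d (\<lambda>r. x_perp r k))"
      using col_norm_sum_le[where d=d and f="\<lambda>k r. x_perp r k * dev k" and n=K] col_norm_scale
      by (simp add: mult.commute[of "x_perp _ _"])
    also have "\<dots> \<le> (\<Sum>k<K. lam 0 * (2 + K) * err_norm * col_norm d (\<lambda>r. x_perp r k))"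
      using weighted_gram_near_diag[OF _ j small] by (intro sum_mono mult_right_mono) (auto simp: dev_def)
    finally show ?thesis by (simp add: sum_distrib_left)
  qed
  have "lam (K - 1) * col_norm d (\<lambda>r. x_perp r j) \<le> lam j * col_norm d (\<lambda>r. x_perp r j)"
    using lam_between[OF j] by (intro mult_right_mono) auto
  also have "\<dots> = col_norm d (\<lambda>r. lam j * x_perp r j)"
    using col_norm_scale[where t="lam j" and d=d and f="\<lambda>r. x_perp r j"] lam_pos[OF j] by simp
  also have "\<dots> \<le> col_norm d (\<lambda>r. \<Sum>k<K. x_perp r k * weighted_gram k j) +
                  col_norm d (\<lambda>r. \<Sum>k<K. x_perp r k * dev k)"
    unfolding split by (rule col_norm_diff_le)
  finally show ?thesis using gram_part dev_part by linarith
qed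

lemma sum_col_norm_x_perp_le:
  assumes small: "err_norm \<le> 1" and absorb: "K * (lam 0 * (2 + K) * err_norm) \<le> lam (K - 1) / 2"
  shows "(\<Sum>j<K. col_norm d (\<lambda>r. x_perp r j)) \<le> perp_const * resid_norm"
proof -
  define \<omega> where "\<omega> = (\<Sum>j<K. col_norm d (\<lambda>r. x_perp r j))"
  define \<gamma> where "\<gamma> = lam 0 * (2 + K) * err_norm"
  have "lam (K - 1) * \<omega> = (\<Sum>j<K. lam (K - 1) * col_norm d (\<lambda>r. x_perp r j))"
    by (simp add: \<omega>_def sum_distrib_left)
  also have "\<dots> \<le> (\<Sum>j<K. resid_norm / a (K - 1) + \<gamma> * \<omega>)"
    by (intro sum_mono) (use col_norm_x_perp_le[OF _ small] in \<open>auto simp: \<omega>_def \<gamma>_def\<close>)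
  finally have "lam (K - 1) * \<omega> \<le> K * (resid_norm / a (K - 1)) + K * \<gamma> * \<omega>" by (simp add: algebra_simps)
  moreover have "K * \<gamma> * \<omega> \<le> lam (K - 1) / 2 * \<omega>"
    using absorb by (intro mult_right_mono) (auto simp: \<gamma>_def \<omega>_def intro: sum_nonneg)
  ultimately have "lam (K - 1) * \<omega> \<le> 2 * (K * (resid_norm / a (K - 1)))" by linarith
  hence "\<omega> \<le> 2 * K * resid_norm / (a (K - 1) * lam (K - 1))"
    using lam_last_pos a_last_pos by (simp add: field_simps)
  thus ?thesis by (simp add: \<omega>_def perp_const_def)
qed

text \<open>The gap \<open>\<lambda>\<^sub>i - \<lambda>\<^sub>j\<close> enters through \<open>G\<^sub>i\<^sub>j = (\<lambda>\<^sub>i - \<lambda>\<^sub>j) S\<^sub>i\<^sub>j + O(\<epsilon>\<^sup>2)\<close>, the gap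
  \<open>a\<^sub>j - a\<^sub>i\<close> through the bound on \<open>G\<^sub>i\<^sub>j\<close>.\<close>

lemma err_coord_offdiag_le:
  assumes ij: "i < K" "j < K" "i \<noteq> j"
  shows "\<bar>err_coord i j\<bar> \<le> resid_norm * (2 / (\<bar>a j - a i\<bar> * \<bar>lam i - lam j\<bar>))
                            + err_norm\<^sup>2 * ((real K + 1) * lam 0 / \<bar>lam i - lam j\<bar>)"
proof -
  have ha: "\<bar>a j - a i\<bar> > 0" using a_neq[OF ij] by simp
  have hl: "\<bar>lam i - lam j\<bar> > 0" using lam_neq[OF ij] by simp
  let ?EE = "col_dot d (\<lambda>r. err r i) (\<lambda>r. err r j)"
  have "weighted_gram i j = lam i * err_coord i j + lam j * err_coord j i +
                            (\<Sum>l<K. lam l * err_coord l i * err_coord l j)"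
    using weighted_gram_expand[OF ij(1,2)] ij(3) by simp
  moreover have "err_coord j i = - err_coord i j - ?EE" using err_coord_skew[OF ij(1,2)] by simp
  ultimately have "(lam i - lam j) * err_coord i j =
        weighted_gram i j + lam j * ?EE - (\<Sum>l<K. lam l * err_coord l i * err_coord l j)"
    by (simp add: algebra_simps)
  hence "\<bar>lam i - lam j\<bar> * \<bar>err_coord i j\<bar> \<le>
         \<bar>weighted_gram i j\<bar> + \<bar>lam j * ?EE\<bar> + \<bar>\<Sum>l<K. lam l * err_coord l i * err_coord l j\<bar>"
    by (simp add: abs_mult[symmetric])
  also have "\<dots> \<le> 2 * resid_norm / \<bar>a j - a i\<bar> + (real K + 1) * lam 0 * err_norm\<^sup>2"
  proof -
    have "\<bar>weighted_gram i j\<bar> \<le> 2 * resid_norm / \<bar>a j - a i\<bar>"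
      using weighted_gram_offdiag_le[OF ij(1,2)] ha by (simp add: field_simps)
    moreover have "\<bar>lam j * ?EE\<bar> \<le> lam 0 * err_norm\<^sup>2" unfolding abs_mult
      using lam_between[OF ij(2)] lam_pos[OF ij(2)] col_dot_err_le[OF ij(1,2)] by (intro mult_mono) auto
    ultimately show ?thesis using err_coord_quadratic_le[OF ij(1,2)] by (simp add: algebra_simps)
  qed
  finally show ?thesis using ha hl by (simp add: field_simps)
qed

lemma err_coord_diag_le: "i < K \<Longrightarrow> \<bar>err_coord i i\<bar> \<le> err_norm\<^sup>2 * (1/2)"
  using err_coord_skew[of i i] col_dot_err_le[of i i] by (simp add: abs_minus_cancel)

lemma sum_abs_err_coord_le:
  "(\<Sum>j<K. \<Sum>i<K. \<bar>err_coord i j\<bar>) \<le> offdiag_const * resid_norm + quad_const * err_norm\<^sup>2"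
proof -
  have "(\<Sum>j<K. \<Sum>i<K. \<bar>err_coord i j\<bar>) \<le>
        (\<Sum>j<K. \<Sum>i<K. resid_norm * (if i = j then 0 else 2 / (\<bar>a j - a i\<bar> * \<bar>lam i - lam j\<bar>))
           + err_norm\<^sup>2 * (if i = j then 1/2 else (real K + 1) * lam 0 / \<bar>lam i - lam j\<bar>))"
    using err_coord_diag_le err_coord_offdiag_le by (intro sum_mono) (auto simp del: of_nat_add)
  also have "\<dots> = offdiag_const * resid_norm + quad_const * err_norm\<^sup>2"
    unfolding offdiag_const_def quad_const_def
    by (simp add: sum.distrib sum_distrib_left sum_distrib_right mult.commute)
  finally show ?thesis .
qed

lemma err_norm_le_resid_norm:
  assumes small: "err_norm \<le> local_radius"
  shows "err_norm \<le> error_bound_const * resid_norm"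
proof -
  have e1: "err_norm \<le> 1" using small by (simp add: local_radius_def)
  have pos: "0 < 2 * real K * lam 0 * (2 + real K)" using lam_pos[of 0] K_pos by simp
  have "err_norm * (2 * real K * lam 0 * (2 + real K)) \<le> lam (K - 1)"
    using small pos by (simp add: local_radius_def field_simps)
  hence absorb: "K * (lam 0 * (2 + K) * err_norm) \<le> lam (K - 1) / 2" by (simp add: field_simps)
  have "err_norm * (2 * quad_const + 1) \<le> 1"
    using small quad_const_nonneg by (simp add: local_radius_def field_simps)
  hence "quad_const * err_norm \<le> 1/2" using err_norm_nonneg by (simp add: algebra_simps)
  hence half: "quad_const * err_norm\<^sup>2 \<le> err_norm / 2"
    using mult_right_mono[OF _ err_norm_nonneg] by (fastforce simp: power2_eq_square)
  have "err_norm \<le> (\<Sum>j<K. col_norm d (\<lambda>r. err r j))"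
    unfolding err_norm_def by (rule frobenius_le_sum_col_norms)
  also have "\<dots> \<le> (\<Sum>j<K. (\<Sum>i<K. \<bar>err_coord i j\<bar>) + col_norm d (\<lambda>r. x_perp r j))"
    by (intro sum_mono col_norm_err_le_split) simp
  also have "\<dots> \<le> (offdiag_const * resid_norm + quad_const * err_norm\<^sup>2) + perp_const * resid_norm"
    unfolding sum.distrib by (intro add_mono sum_abs_err_coord_le sum_col_norm_x_perp_le[OF e1 absorb])
  finally have "err_norm \<le> 2 * (offdiag_const + perp_const) * resid_norm"
    using half by (simp add: algebra_simps)
  thus ?thesis unfolding error_bound_const_def using resid_norm_nonneg by (simp add: algebra_simps)
qed

end

section \<open>Stiefel matrices and the residual\<close>

lemma dist_F_attained:
  fixes X Q :: "real mat"
  obtains s where "\<And>i. i < dim_col Q \<Longrightarrow> s ! i * s ! i = 1"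
    and "dist_F X Q = frob_norm (X - Q * mat_diag (dim_col Q) (\<lambda>i. s ! i))"
proof -
  let ?S = "{q :: real list. length q = dim_col Q \<and> set q \<subseteq> {1, -1}}"
  let ?f = "\<lambda>q. frob_norm (X - Q * mat_diag (dim_col Q) (\<lambda>i. q ! i))"
  have "finite ?S"
    using finite_lists_length_eq[of "{1, -1 :: real}" "dim_col Q"] by (simp add: conj_commute)
  moreover have "replicate (dim_col Q) 1 \<in> ?S" by auto
  hence "?f ` ?S \<noteq> {}" by blast
  ultimately have "Min (?f ` ?S) \<in> ?f ` ?S" by (intro Min_in) auto
  then obtain s where s: "length s = dim_col Q" "set s \<subseteq> {1, -1}" and "dist_F X Q = ?f s"
    unfolding dist_F_def by auto
  moreover have "s ! i * s ! i = 1" if "i < dim_col Q" for i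
  proof -
    have "s ! i \<in> {1, -1}" using s that by (metis nth_mem subsetD)
    thus ?thesis by auto
  qed
  ultimately show ?thesis using that by blast
qed

lemma stiefel_col_dot:
  assumes "X \<in> stiefel d K" and "i < K" and "j < K"
  shows "col_dot d (\<lambda>r. X $$ (r,i)) (\<lambda>r. X $$ (r,j)) = (if i = j then 1 else 0)"
  using assms index_transpose_mult_mat_sum[of X d K i j] unfolding stiefel_def col_dot_def by auto

lemma stiefel_signed_col_dot:
  assumes "Q \<in> stiefel d K" and "i < K" and "j < K" and "\<And>i. i < K \<Longrightarrow> s i * s i = 1"
  shows "col_dot d (\<lambda>r. Q $$ (r,i) * s i) (\<lambda>r. Q $$ (r,j) * s j) = (if i = j then 1 else 0)"
proof -
  have "col_dot d (\<lambda>r. Q $$ (r,i) * s i) (\<lambda>r. Q $$ (r,j) * s j) =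
        s i * s j * col_dot d (\<lambda>r. Q $$ (r,i)) (\<lambda>r. Q $$ (r,j))"
    unfolding col_dot_def sum_distrib_left by (intro sum.cong refl) (simp add: mult_ac)
  thus ?thesis using stiefel_col_dot[OF assms(1-3)] assms(4)[OF assms(2)] by (cases "i = j") simp_all
qed

lemma index_A_op:
  fixes Q X :: "real mat"
  assumes Q: "Q \<in> carrier_mat d K" and X: "X \<in> carrier_mat d K"
    and lam: "\<And>l. l < K \<Longrightarrow> 0 \<le> lam l" and r: "r < d" and j: "j < K"
  shows "A_op Q (mat_diag K (\<lambda>i. sqrt (lam i))) a \<alpha> X $$ (r,j)
     = \<alpha> * X $$ (r,j) + a j * (\<Sum>t<d. (\<Sum>l<K. Q $$ (r,l) * lam l * Q $$ (t,l)) * X $$ (t,j))"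
proof -
  define L where "L = mat_diag K lam"
  have L: "L \<in> carrier_mat K K" by (simp add: L_def)
  have QL: "Q * L \<in> carrier_mat d K" using Q L by simp
  have QT: "transpose_mat Q \<in> carrier_mat K d" using Q by simp
  have M: "Q * L * transpose_mat Q \<in> carrier_mat d d" using Q L by simp
  have MX: "Q * L * transpose_mat Q * X \<in> carrier_mat d K" using M X by simp
  have Me: "(Q * L * transpose_mat Q) $$ (r,t) = (\<Sum>l<K. Q $$ (r,l) * lam l * Q $$ (t,l))"
    if "r < d" "t < d" for r t
    unfolding index_mult_mat_sum[OF QL QT that] using that Q mat_diag_mult_right[OF Q, of lam]
    by (intro sum.cong refl) (simp add: L_def)
  have "mat_diag K (\<lambda>i. sqrt (lam i)) * mat_diag K (\<lambda>i. sqrt (lam i)) = L"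
    unfolding mat_diag_diag L_def by (rule eq_matI) (auto simp: mat_diag_def lam)
  hence "A_op Q (mat_diag K (\<lambda>i. sqrt (lam i))) a \<alpha> X = \<alpha> \<cdot>\<^sub>m X + Q * L * transpose_mat Q * X * mat_diag K a"
    unfolding A_op_def using X by simp
  moreover have "(Q * L * transpose_mat Q * X * mat_diag K a) $$ (r,j) = (Q * L * transpose_mat Q * X) $$ (r,j) * a j"
    using mat_diag_mult_right[OF MX, of a] r j by simp
  moreover have "(Q * L * transpose_mat Q * X) $$ (r,j) =
                 (\<Sum>t<d. (\<Sum>l<K. Q $$ (r,l) * lam l * Q $$ (t,l)) * X $$ (t,j))"
    using r by (simp add: index_mult_mat_sum[OF M X r j] Me)
  moreover have MXa: "Q * L * transpose_mat Q * X * mat_diag K a \<in> carrier_mat d K" using MX by simp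
  ultimately show ?thesis
    using carrier_matD[OF MXa] carrier_matD[OF X] r j by (simp add: mult.commute)
qed

lemma A_op_carrier:
  assumes "Q \<in> carrier_mat d K" and "X \<in> carrier_mat d K"
  shows "A_op Q (mat_diag K f) a \<alpha> X \<in> carrier_mat d K"
proof -
  have "Q * (mat_diag K f * mat_diag K f) * transpose_mat Q * X * mat_diag K a \<in> carrier_mat d K"
  proof -
    have DD: "mat_diag K f * mat_diag K f \<in> carrier_mat K K" by simp
    have QT: "transpose_mat Q \<in> carrier_mat K d" using assms(1) by simp
    show ?thesis
      by (rule mult_carrier_mat[OF mult_carrier_mat[OF mult_carrier_mat[OF
            mult_carrier_mat[OF assms(1) DD] QT] assms(2)] mat_diag_dim])
  qed
  thus ?thesis using assms unfolding A_op_def by simp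
qed

lemma index_mult_minus_A_op:
  fixes Q X P :: "real mat"
  assumes Q: "Q \<in> carrier_mat d K" and X: "X \<in> carrier_mat d K" and P: "P \<in> carrier_mat K K"
    and lam: "\<And>l. l < K \<Longrightarrow> 0 \<le> lam l" and rj: "r < d" "j < K"
  shows "(X * P - A_op Q (mat_diag K (\<lambda>i. sqrt (lam i))) a \<alpha> X) $$ (r,j) =
         (\<Sum>k<K. X $$ (r,k) * P $$ (k,j)) -
         (\<alpha> * X $$ (r,j) + a j * (\<Sum>t<d. (\<Sum>l<K. Q $$ (r,l) * lam l * Q $$ (t,l)) * X $$ (t,j)))"
proof -
  have "A_op Q (mat_diag K (\<lambda>i. sqrt (lam i))) a \<alpha> X \<in> carrier_mat d K" by (rule A_op_carrier[OF Q X])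
  thus ?thesis
    using index_A_op[where lam=lam and a=a and \<alpha>=\<alpha>, OF Q X lam rj] rj
    by (simp add: index_mult_mat_sum[OF X P rj])
qed

text \<open>The signs in \<open>q\<close> cancel in \<open>Q \<Lambda> Q\<^sup>T\<close>.\<close>

lemma signed_weighted_proj_eq:
  assumes s: "\<And>l. l < K \<Longrightarrow> s l * s l = 1"
  shows "(\<Sum>l<K. (lam l * col_dot d (\<lambda>r. Q $$ (r,l) * s l) (\<lambda>r. X $$ (r,j))) * (Q $$ (r,l) * s l)) =
         (\<Sum>t<d. (\<Sum>l<K. Q $$ (r,l) * lam l * Q $$ (t,l)) * X $$ (t,j))"
proof -
  have "(\<Sum>l<K. (lam l * col_dot d (\<lambda>r. Q $$ (r,l) * s l) (\<lambda>r. X $$ (r,j))) * (Q $$ (r,l) * s l)) =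
        (\<Sum>l<K. \<Sum>t<d. Q $$ (r,l) * lam l * Q $$ (t,l) * X $$ (t,j) * (s l * s l))"
    unfolding col_dot_def by (simp only: sum_distrib_left sum_distrib_right) (simp only: mult_ac)
  also have "\<dots> = (\<Sum>t<d. \<Sum>l<K. Q $$ (r,l) * lam l * Q $$ (t,l) * X $$ (t,j))"
    using s by (subst sum.swap) simp
  finally show ?thesis by (simp add: sum_distrib_right)
qed

text \<open>A Stiefel point \<open>X\<close> and the best signed copy of \<open>Q\<close> form an
  \<open>ordered_frame_perturbation\<close> whose \<open>err_norm\<close> is \<open>dist_F X Q\<close> and whose \<open>resid_norm\<close> is
  \<open>\<rho>\<^sub>\<alpha>(X)\<close>.\<close>

lemma (in decreasing_weights) dist_F_le_rho:
  assumes Qs: "Q \<in> stiefel d K" and Xs: "X \<in> stiefel d K" and small: "dist_F X Q \<le> local_radius"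
  shows "dist_F X Q \<le> error_bound_const * rho Q (mat_diag K (\<lambda>i. sqrt (lam i))) a \<alpha> X"
proof -
  have Q: "Q \<in> carrier_mat d K" and X: "X \<in> carrier_mat d K" using Qs Xs by (auto simp: stiefel_def)
  obtain s where sq: "\<And>i. i < K \<Longrightarrow> s ! i * s ! i = 1"
    and dist: "dist_F X Q = frob_norm (X - Q * mat_diag K (\<lambda>i. s ! i))"
    using dist_F_attained[of Q X] Q by auto
  define x where "x = (\<lambda>r j. X $$ (r,j))"
  define q where "q = (\<lambda>r i. Q $$ (r,i) * s ! i)"
  define A where "A = A_op Q (mat_diag K (\<lambda>i. sqrt (lam i))) a \<alpha> X"
  define P where "P = psd_sqrt (transpose_mat A * A)"
  have A: "A \<in> carrier_mat d K" unfolding A_def by (rule A_op_carrier[OF Q X])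
  note P = psd_sqrt_gram[OF A, folded P_def]
  interpret ordered_frame_perturbation d K x q lam a "\<lambda>k j. P $$ (k,j)" \<alpha>
  proof
    show "col_dot d (\<lambda>r. x r i) (\<lambda>r. x r j) = (if i = j then 1 else 0)"
      "col_dot d (\<lambda>r. q r i) (\<lambda>r. q r j) = (if i = j then 1 else 0)"
      "P $$ (i,j) = P $$ (j,i)" if "i < K" "j < K" for i j
      using stiefel_col_dot[OF Xs that] stiefel_signed_col_dot[where s="\<lambda>i. s ! i", OF Qs that sq]
        symmetric_mat_entry[OF P(2) P(1) that] by (simp_all add: x_def q_def)
  qed
  have "residual r j = (X * P - A) $$ (r,j)" if rj: "r < d" "j < K" for r j
  proof -
    have "residual r j = (\<Sum>k<K. X $$ (r,k) * P $$ (k,j)) -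
            (\<alpha> * X $$ (r,j) + a j * (\<Sum>t<d. (\<Sum>l<K. Q $$ (r,l) * lam l * Q $$ (t,l)) * X $$ (t,j)))"
      unfolding residual_def weighted_proj_def overlap_def
      using signed_weighted_proj_eq[where s="\<lambda>i. s ! i" and K=K and lam=lam and d=d and Q=Q and X=X
          and j=j and r=r, OF sq] by (simp add: x_def q_def)
    also have "\<dots> = (X * P - A) $$ (r,j)"
      unfolding A_def using lam_pos
      by (intro index_mult_minus_A_op[symmetric, OF Q X P(1) _ rj]) (auto intro: less_imp_le)
    finally show ?thesis .
  qed
  hence "resid_norm = rho Q (mat_diag K (\<lambda>i. sqrt (lam i))) a \<alpha> X"
    using A P(1) unfolding resid_norm_def rho_def frob_norm_def Let_def A_def[symmetric] P_def[symmetric]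
    by simp
  moreover have "err_norm = dist_F X Q"
    using Q X mat_diag_mult_right[OF Q, of "\<lambda>i. s ! i"]
    unfolding dist frob_norm_def err_norm_def err_def by (simp add: x_def q_def)
  ultimately show ?thesis using err_norm_le_resid_norm small by simp
qed

theorem theorem2:
  fixes d K :: nat and Q :: "real mat" and lam a :: "nat \<Rightarrow> real"
  assumes "1 \<le> K" and "K < d"
    and "Q \<in> stiefel d K"
    and "\<And>i j. i < j \<Longrightarrow> j < K \<Longrightarrow> lam j < lam i" and "0 < lam (K - 1)"
    and "\<And>i j. i < j \<Longrightarrow> j < K \<Longrightarrow> a j < a i" and "0 < a (K - 1)"
  shows "\<exists>\<delta>. 0 < \<delta> \<and> \<delta> < sqrt 2 / 2 \<and>
           lam (K - 1) * a (K - 1) - lam 0 * a 0 * \<delta> > 0 \<and>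
           (\<forall>\<alpha>. 0 \<le> \<alpha> \<and> \<alpha> < lam (K - 1) * a (K - 1) - lam 0 * a 0 * \<delta> \<longrightarrow>
              (\<exists>\<eta>1 > 0. \<forall>X \<in> stiefel d K. dist_F X Q \<le> \<delta> \<longrightarrow>
                 dist_F X Q \<le> \<eta>1 * rho Q (mat_diag K (\<lambda>i. sqrt (lam i))) a \<alpha> X))"
proof -
  interpret decreasing_weights K lam a using assms by unfold_locales auto
  have pos: "0 < lam 0" "0 < a 0" "0 < lam (K - 1)" "0 < a (K - 1)"
    using lam_pos a_pos K_pos lam_last_pos a_last_pos by simp_all
  define \<delta> where "\<delta> = min local_radius (min (1/2) (lam (K - 1) * a (K - 1) / (2 * lam 0 * a 0)))"
  have "0 < lam (K - 1) * a (K - 1) / (2 * lam 0 * a 0)" using pos by simp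
  hence "0 < \<delta>" unfolding \<delta>_def using local_radius_pos by simp
  moreover have "\<delta> < sqrt 2 / 2"
  proof -
    have "1 / 2 < sqrt 2 / 2" using real_sqrt_less_mono[of 1 2] by simp
    thus ?thesis unfolding \<delta>_def by linarith
  qed
  moreover have "lam 0 * a 0 * \<delta> \<le> lam (K - 1) * a (K - 1) / 2"
  proof -
    have "\<delta> \<le> lam (K - 1) * a (K - 1) / (2 * lam 0 * a 0)" unfolding \<delta>_def by simp
    thus ?thesis using pos by (simp add: field_simps)
  qed
  moreover have "\<forall>X \<in> stiefel d K. dist_F X Q \<le> \<delta> \<longrightarrow>
                   dist_F X Q \<le> error_bound_const * rho Q (mat_diag K (\<lambda>i. sqrt (lam i))) a \<alpha> X" for \<alpha>
    using dist_F_le_rho[OF assms(3)] unfolding \<delta>_def by auto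
  moreover have "0 < lam (K - 1) * a (K - 1)" using pos by simp
  ultimately show ?thesis using error_bound_const_pos by (intro exI[of _ \<delta>]) auto
qed

end
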